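(* Let $(G,\gamma,b)$ be an RES-graph such that every reduction of $(G,\gamma,b)$ has flooding number at least $\tilde{\nu}(G,\gamma,b)+2$. Then for every arc $f$ whose edge is an edge of $G-b$, both $(f,0)$ and $(f,1)$ are non-loop elements of $M(G,\gamma,b)$. Equivalently, for each $i\in\{0,1\}$ there is an optimal flooding of $(G,\gamma,b)$ containing a zero circuit that is represented by $(f,i)$.
   Context: Graphs are finite and may have loops and multiple edges. Each edge is an unordered pair of half-edges; each half-edge is incident to a vertex, and a loop contributes $2$ to the degree of its vertex. An arc is an ordered pair of half-edges forming an edge, with tail (vertex of the first half-edge) and head (vertex of the second). A trail is a sequence of arcs with pairwise distinct edges, the head of each arc being the tail of the next. A circuit is a trail whose head equals its tail. A circuit hits $v$ if it contains an arc incident to $v$. A circuit-decomposition is a collection of circuits using each edge exactly once. A graph is Eulerian if it is connected and all degrees are even. A signature is a function $\gamma:E(G)\to\mathbb{Z}_2$. The weight of a trail is the $\mathbb{Z}_2$-sum of $\gamma$ over its edges, and a trail is zero or non-zero accordingly. An RES-graph is a triple $(G,\gamma,b)$ with $G$ Eulerian, $\gamma$ a signature, and $b\in V(G)$. The flooding number $\tilde{\nu}(G,\gamma,b)$ is the maximum size of a circuit-decomposition in which every circuit is non-zero and hits $b$; it is $0$ if none exists. A flooding is a circuit-decomposition of size $\deg(b)/2$ in which every circuit has tail and head $b$. A flooding is optimal if it has the maximum number of non-zero circuits among all floodings. For a zero circuit $C$ with tail and head $b$, a representative of $C$ is a pair $(f,\alpha)$ where $f$ is an arc of $C$ and $\alpha\in\{0,1\}$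 is the weight of the initial subtrail of $C$ ending with $f$. A system of representatives for a flooding is a set with exactly one representative of each of its zero circuits. The flooding matroid $M(G,\gamma,b)$ has ground set all pairs $(f,\alpha)$ with $f$ an arc and $\alpha\in\{0,1\}$. Its bases are the systems of representatives of optimal floodings; the empty set is a basis if some optimal flooding has no zero circuit. An element is a non-loop element if it lies in some basis. Let $e=\{h,r\}$ be an edge of $G-b$. An $e$-reduction of $(G,\gamma,b)$ is any RES-graph $(\hat G,\hat\gamma,b)$ constructed as follows. Take new half-edges $h',r'$ at $b$. The graph $\hat G$ is obtained from $G$ by deleting $e$ and adding the edges $\{h,h'\}$ and $\{r,r'\}$. The signature $\hat\gamma$ agrees with $\gamma$ elsewhere, and $\hat\gamma(\{h,h'\})+\hat\gamma(\{r,r'\})=\gamma(e)$. A reduction is an $e$-reduction for some edge $e$ of $G-b$. *)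

theory Defs
  imports Main "HOL-Library.Z2"
begin

text \<open>Graphs with half-edges. Half-edges are natural numbers (so fresh half-edges
  are always available for reductions); vertices have an arbitrary type.
  An edge is the unordered pair {h, mate h}.\<close>

record 'v hgraph =
  verts :: "'v set"
  hedges :: "nat set"
  inc :: "nat \<Rightarrow> 'v"
  mate :: "nat \<Rightarrow> nat"

definition wf_graph :: "'v hgraph \<Rightarrow> bool" where
  "wf_graph G \<longleftrightarrow> finite (verts G) \<and> finite (hedges G) \<and>
     (\<forall>h\<in>hedges G. inc G h \<in> verts G \<and> mate G h \<in> hedges G \<and>
                    mate G h \<noteq> h \<and> mate G (mate G h) = h)"

definition edges :: "'v hgraph \<Rightarrow> nat set set" where
  "edges G = {{h, mate G h} | h. h \<in> hedges G}"

text \<open>Degree: number of half-edges at v (a loop contributes 2).\<close>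
definition deg :: "'v hgraph \<Rightarrow> 'v \<Rightarrow> nat" where
  "deg G v = card {h \<in> hedges G. inc G h = v}"

definition adj :: "'v hgraph \<Rightarrow> ('v \<times> 'v) set" where
  "adj G = {(inc G h, inc G (mate G h)) | h. h \<in> hedges G}"

definition connected_graph :: "'v hgraph \<Rightarrow> bool" where
  "connected_graph G \<longleftrightarrow> (\<forall>u\<in>verts G. \<forall>v\<in>verts G. (u, v) \<in> (adj G)\<^sup>*)"

definition eulerian :: "'v hgraph \<Rightarrow> bool" where
  "eulerian G \<longleftrightarrow> wf_graph G \<and> connected_graph G \<and> (\<forall>v\<in>verts G. even (deg G v))"

type_synonym arc = "nat \<times> nat"

definition is_arc :: "'v hgraph \<Rightarrow> arc \<Rightarrow> bool" where
  "is_arc G a \<longleftrightarrow> fst a \<in> hedges G \<and> snd a = mate G (fst a)"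

definition arc_edge :: "arc \<Rightarrow> nat set" where
  "arc_edge a = {fst a, snd a}"

definition tail :: "'v hgraph \<Rightarrow> arc \<Rightarrow> 'v" where
  "tail G a = inc G (fst a)"

definition head :: "'v hgraph \<Rightarrow> arc \<Rightarrow> 'v" where
  "head G a = inc G (snd a)"

definition is_trail :: "'v hgraph \<Rightarrow> arc list \<Rightarrow> bool" where
  "is_trail G T \<longleftrightarrow> T \<noteq> [] \<and> (\<forall>a\<in>set T. is_arc G a) \<and> distinct (map arc_edge T) \<and>
     (\<forall>i. Suc i < length T \<longrightarrow> head G (T ! i) = tail G (T ! Suc i))"

definition trail_tail :: "'v hgraph \<Rightarrow> arc list \<Rightarrow> 'v" where
  "trail_tail G T = tail G (hd T)"

definition trail_head :: "'v hgraph \<Rightarrow> arc list \<Rightarrow> 'v" where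
  "trail_head G T = head G (last T)"

definition is_circuit :: "'v hgraph \<Rightarrow> arc list \<Rightarrow> bool" where
  "is_circuit G C \<longleftrightarrow> is_trail G C \<and> trail_head G C = trail_tail G C"

definition hits :: "'v hgraph \<Rightarrow> arc list \<Rightarrow> 'v \<Rightarrow> bool" where
  "hits G C v \<longleftrightarrow> (\<exists>a\<in>set C. tail G a = v \<or> head G a = v)"

definition circuit_decomposition :: "'v hgraph \<Rightarrow> arc list list \<Rightarrow> bool" where
  "circuit_decomposition G D \<longleftrightarrow> (\<forall>C\<in>set D. is_circuit G C) \<and>
     distinct (concat (map (map arc_edge) D)) \<and>
     set (concat (map (map arc_edge) D)) = edges G"

type_synonym signature = "nat set \<Rightarrow> bit"

definition weight :: "signature \<Rightarrow> arc list \<Rightarrow> bit" where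
  "weight \<gamma> T = sum_list (map (\<gamma> \<circ> arc_edge) T)"

definition RES_graph :: "'v hgraph \<Rightarrow> signature \<Rightarrow> 'v \<Rightarrow> bool" where
  "RES_graph G \<gamma> b \<longleftrightarrow> eulerian G \<and> b \<in> verts G"

definition flooding_number :: "'v hgraph \<Rightarrow> signature \<Rightarrow> 'v \<Rightarrow> nat" where
  "flooding_number G \<gamma> b = Max (insert 0 {length D | D. circuit_decomposition G D \<and>
      (\<forall>C\<in>set D. weight \<gamma> C \<noteq> 0 \<and> hits G C b)})"

definition flooding :: "'v hgraph \<Rightarrow> 'v \<Rightarrow> arc list list \<Rightarrow> bool" where
  "flooding G b F \<longleftrightarrow> circuit_decomposition G F \<and> 2 * length F = deg G b \<and>
     (\<forall>C\<in>set F. trail_tail G C = b \<and> trail_head G C = b)"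

definition num_nonzero :: "signature \<Rightarrow> arc list list \<Rightarrow> nat" where
  "num_nonzero \<gamma> F = length (filter (\<lambda>C. weight \<gamma> C \<noteq> 0) F)"

definition optimal_flooding :: "'v hgraph \<Rightarrow> signature \<Rightarrow> 'v \<Rightarrow> arc list list \<Rightarrow> bool" where
  "optimal_flooding G \<gamma> b F \<longleftrightarrow> flooding G b F \<and>
     (\<forall>F'. flooding G b F' \<longrightarrow> num_nonzero \<gamma> F' \<le> num_nonzero \<gamma> F)"

definition represents :: "signature \<Rightarrow> arc \<times> bit \<Rightarrow> arc list \<Rightarrow> bool" where
  "represents \<gamma> x C \<longleftrightarrow> (\<exists>i<length C. fst x = C ! i \<and> snd x = weight \<gamma> (take (Suc i) C))"

definition zero_circuits :: "signature \<Rightarrow> arc list list \<Rightarrow> arc list set" where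
  "zero_circuits \<gamma> F = {C \<in> set F. weight \<gamma> C = 0}"

definition system_of_representatives ::
    "signature \<Rightarrow> arc list list \<Rightarrow> (arc \<times> bit) set \<Rightarrow> bool" where
  "system_of_representatives \<gamma> F R \<longleftrightarrow>
     (\<forall>x\<in>R. \<exists>C\<in>zero_circuits \<gamma> F. represents \<gamma> x C) \<and>
     (\<forall>C\<in>zero_circuits \<gamma> F. \<exists>!x. x \<in> R \<and> represents \<gamma> x C)"

definition flooding_matroid_bases ::
    "'v hgraph \<Rightarrow> signature \<Rightarrow> 'v \<Rightarrow> (arc \<times> bit) set set" where
  "flooding_matroid_bases G \<gamma> b =
     {R. \<exists>F. optimal_flooding G \<gamma> b F \<and> system_of_representatives \<gamma> F R}"

definition nonloop_element :: "'v hgraph \<Rightarrow> signature \<Rightarrow> 'v \<Rightarrow> arc \<times> bit \<Rightarrow> bool" where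
  "nonloop_element G \<gamma> b x \<longleftrightarrow> (\<exists>B\<in>flooding_matroid_bases G \<gamma> b. x \<in> B)"

definition edge_of_G_minus :: "'v hgraph \<Rightarrow> 'v \<Rightarrow> nat \<Rightarrow> nat \<Rightarrow> bool" where
  "edge_of_G_minus G b h r \<longleftrightarrow> h \<in> hedges G \<and> r = mate G h \<and> inc G h \<noteq> b \<and> inc G r \<noteq> b"

definition is_reduction ::
    "'v hgraph \<Rightarrow> signature \<Rightarrow> 'v \<Rightarrow> 'v hgraph \<Rightarrow> signature \<Rightarrow> bool" where
  "is_reduction G \<gamma> b G' \<gamma>' \<longleftrightarrow>
     (\<exists>h r h' r'. edge_of_G_minus G b h r \<and>
        h' \<notin> hedges G \<and> r' \<notin> hedges G \<and> h' \<noteq> r' \<and>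
        G' = \<lparr>verts = verts G, hedges = hedges G \<union> {h', r'},
              inc = (inc G)(h' := b, r' := b),
              mate = (mate G)(h := h', h' := h, r := r', r' := r)\<rparr> \<and>
        (\<forall>e\<in>edges G - {{h, r}}. \<gamma>' e = \<gamma> e) \<and>
        \<gamma>' {h, h'} + \<gamma>' {r, r'} = \<gamma> {h, r})"

end

theory Submission
  imports Defs "HOL-Library.Multiset"
begin

text \<open>Fix an arc \<open>f = (h, r)\<close> of \<open>G - b\<close> and \<open>i \<in> \<int>\<^sub>2\<close>, and take the reduction at \<open>{h, r}\<close>
  whose new edge \<open>{r, r'}\<close> gets signature \<open>i + 1\<close>. Its flooding number exceeds the flooding
  number \<open>\<nu>\<close> of \<open>G\<close> by at least two, so cutting a maximum decomposition at \<open>b\<close> yields a flooding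
  of the reduction with at least \<open>\<nu> + 2\<close> non-zero circuits. Gluing the circuits through the two
  new edges back along \<open>{h, r}\<close> gives a flooding of \<open>G\<close> with one circuit less; if both new edges
  lie on one circuit, its inner part closes up with \<open>f\<close> to a closed walk avoiding \<open>b\<close>, which by
  connectivity meets another circuit and is spliced into it. A flooding of \<open>G\<close> with a non-zero
  circuit has at most \<open>\<nu>\<close> of them (merge all zero circuits into a non-zero one), so both glued
  circuits were non-zero: the new circuit is zero, the flooding is optimal, and by the choice of
  signature the part of the new circuit up to \<open>f\<close> has weight \<open>i\<close>.\<close>

section \<open>Walks\<close>

fun walk :: "'v hgraph \<Rightarrow> arc list \<Rightarrow> 'v \<Rightarrow> 'v \<Rightarrow> bool" where
  "walk G [] x y \<longleftrightarrow> x = y"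
| "walk G (a # T) x y \<longleftrightarrow> tail G a = x \<and> walk G T (head G a) y"

lemma walk_append: "walk G (T @ S) x z \<longleftrightarrow> (\<exists>y. walk G T x y \<and> walk G S y z)"
  by (induction T arbitrary: x) auto

lemma walk_appendI: "walk G T x y \<Longrightarrow> walk G S y z \<Longrightarrow> walk G (T @ S) x z"
  by (auto simp: walk_append)

lemma walk_snoc [simp]: "walk G (T @ [a]) x z \<longleftrightarrow> walk G T x (tail G a) \<and> head G a = z"
  by (induction T arbitrary: x) auto

lemma walk_concat: "\<forall>P\<in>set Ps. walk G P x x \<Longrightarrow> walk G (concat Ps) x x"
  by (induction Ps) (auto intro: walk_appendI)

lemma walk_iff_consecutive:
  "T \<noteq> [] \<Longrightarrow> walk G T x y \<longleftrightarrow> tail G (hd T) = x \<and> head G (last T) = y \<and>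
     (\<forall>i. Suc i < length T \<longrightarrow> head G (T ! i) = tail G (T ! Suc i))"
proof (induction T arbitrary: x)
  case (Cons a T)
  show ?case
  proof (cases "T = []")
    case False
    then obtain c T' where "T = c # T'" by (cases T) auto
    then have "(\<forall>i. Suc i < length (a # T) \<longrightarrow> head G ((a # T) ! i) = tail G ((a # T) ! Suc i)) \<longleftrightarrow>
        head G a = tail G (hd T) \<and> (\<forall>i. Suc i < length T \<longrightarrow> head G (T ! i) = tail G (T ! Suc i))"
      by (simp add: All_less_Suc2)
    then show ?thesis using Cons.IH[OF False] False by auto
  qed simp
qed simp

lemma walk_heads: "walk G T x y \<Longrightarrow> T \<noteq> [] \<Longrightarrow> map (head G) T = tl (map (tail G) T) @ [y]"
proof (induction T arbitrary: x)
  case (Cons a T) then show ?case by (cases T) auto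
qed simp

lemma closed_walk_heads_subset: "walk G T x x \<Longrightarrow> head G ` set T \<subseteq> tail G ` set T"
proof (cases T)
  case (Cons a R)
  assume w: "walk G T x x"
  then have "set (map (head G) T) = set (map (tail G) R) \<union> {x}"
    using walk_heads[OF w] Cons by simp
  then show ?thesis using w Cons by auto
qed simp

definition reverse_arc :: "arc \<Rightarrow> arc" where
  "reverse_arc a = (snd a, fst a)"

definition reverse_walk :: "arc list \<Rightarrow> arc list" where
  "reverse_walk T = rev (map reverse_arc T)"

lemma reverse_arc_simps [simp]:
  "tail G (reverse_arc a) = head G a" "head G (reverse_arc a) = tail G a"
  "arc_edge (reverse_arc a) = arc_edge a" "reverse_arc (reverse_arc a) = a"
  by (auto simp: reverse_arc_def tail_def head_def arc_edge_def)

lemma reverse_walk_simps [simp]: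
  "reverse_walk [] = []" "reverse_walk (a # T) = reverse_walk T @ [reverse_arc a]"
  "reverse_walk (T @ S) = reverse_walk S @ reverse_walk T"
  "reverse_walk (reverse_walk T) = T" "length (reverse_walk T) = length T"
  "reverse_walk T = [] \<longleftrightarrow> T = []"
  by (simp_all add: reverse_walk_def rev_map comp_def)

lemma set_reverse_walk: "set (reverse_walk T) = reverse_arc ` set T"
  by (simp add: reverse_walk_def)

lemma map_arc_edge_reverse_walk: "map arc_edge (reverse_walk T) = rev (map arc_edge T)"
  by (simp add: reverse_walk_def rev_map comp_def)

lemma map_tail_reverse_walk: "map (tail G) (reverse_walk T) = rev (map (head G) T)"
  by (simp add: reverse_walk_def rev_map comp_def)

lemma hd_reverse_walk: "T \<noteq> [] \<Longrightarrow> hd (reverse_walk T) = reverse_arc (last T)"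
  by (simp add: reverse_walk_def hd_rev last_map)

lemma walk_reverse_walk: "walk G T x y \<Longrightarrow> walk G (reverse_walk T) y x"
  by (induction T arbitrary: x) (auto intro: walk_appendI)

lemma is_arc_reverse_arc: "wf_graph G \<Longrightarrow> is_arc G a \<Longrightarrow> is_arc G (reverse_arc a)"
  by (auto simp: wf_graph_def is_arc_def reverse_arc_def)

lemma edge_of_member:
  "wf_graph G \<Longrightarrow> h \<in> hedges G \<Longrightarrow> y \<in> {h, mate G h} \<Longrightarrow> {y, mate G y} = {h, mate G h}"
  by (auto simp: wf_graph_def)

lemma arc_edges_disjoint:
  assumes wf: "wf_graph G" and "is_arc G a" "is_arc G a'" "arc_edge a \<noteq> arc_edge a'"
  shows "arc_edge a \<inter> arc_edge a' = {}"
proof (rule ccontr)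
  have e: "arc_edge a = {fst a, mate G (fst a)}" "arc_edge a' = {fst a', mate G (fst a')}"
    and h: "fst a \<in> hedges G" "fst a' \<in> hedges G"
    using assms(2,3) by (auto simp: is_arc_def arc_edge_def)
  assume "arc_edge a \<inter> arc_edge a' \<noteq> {}"
  then obtain x where x: "x \<in> {fst a, mate G (fst a)}" "x \<in> {fst a', mate G (fst a')}"
    unfolding e by blast
  have "arc_edge a = arc_edge a'"
    unfolding e using edge_of_member[OF wf h(1) x(1)] edge_of_member[OF wf h(2) x(2)] by (rule trans[OF sym])
  then show False using assms(4) by simp
qed

lemma arc_eq_or_reverse:
  assumes "wf_graph G" "is_arc G a" "is_arc G a'" "arc_edge a = arc_edge a'"
  shows "a' = a \<or> a' = reverse_arc a"
proof -
  have a: "a = (fst a, mate G (fst a))" "a' = (fst a', mate G (fst a'))" "fst a \<in> hedges G"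
    using assms(2,3) by (auto simp: is_arc_def prod_eq_iff)
  have "{fst a, mate G (fst a)} = {fst a', mate G (fst a')}"
    using assms(2,3,4) by (simp add: is_arc_def arc_edge_def)
  then have "fst a' = fst a \<or> fst a' = mate G (fst a)"
    by (auto simp: doubleton_eq_iff)
  then show ?thesis using a assms(1) unfolding wf_graph_def reverse_arc_def by (metis fst_conv snd_conv)
qed

lemma weight_simps [simp]:
  "weight \<gamma> [] = 0" "weight \<gamma> (a # T) = \<gamma> (arc_edge a) + weight \<gamma> T"
  "weight \<gamma> (T @ S) = weight \<gamma> T + weight \<gamma> S"
  by (simp_all add: weight_def)

lemma weight_reverse_walk [simp]: "weight \<gamma> (reverse_walk T) = weight \<gamma> T"
  by (induction T) (auto simp: add.commute)

lemma weight_mset: "mset T = mset S \<Longrightarrow> weight \<gamma> T = weight \<gamma> S"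
  unfolding weight_def by (metis mset_map sum_mset_sum_list)

lemma is_circuit_iff_walk:
  "is_circuit G C \<longleftrightarrow> C \<noteq> [] \<and> (\<forall>a\<in>set C. is_arc G a) \<and> distinct (map arc_edge C) \<and>
     walk G C (trail_tail G C) (trail_tail G C)"
  by (auto simp: is_circuit_def is_trail_def walk_iff_consecutive trail_head_def trail_tail_def)

lemma is_circuitI:
  "C \<noteq> [] \<Longrightarrow> \<forall>a\<in>set C. is_arc G a \<Longrightarrow> distinct (map arc_edge C) \<Longrightarrow> walk G C x x \<Longrightarrow> is_circuit G C"
  by (cases C) (auto simp: is_circuit_iff_walk trail_tail_def)

lemma trail_ends_walk: "C \<noteq> [] \<Longrightarrow> walk G C x y \<Longrightarrow> trail_tail G C = x \<and> trail_head G C = y"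
  by (simp add: walk_iff_consecutive trail_tail_def trail_head_def)

section \<open>Circuit decompositions\<close>

abbreviation edge_mset :: "arc list \<Rightarrow> nat set multiset" where
  "edge_mset T \<equiv> mset (map arc_edge T)"

lemma edge_mset_reverse_walk [simp]: "image_mset arc_edge (mset (reverse_walk T)) = image_mset arc_edge (mset T)"
  by (metis map_arc_edge_reverse_walk mset_map mset_rev)

lemma mset_eq_mset_set_iff: "finite A \<Longrightarrow> mset xs = mset_set A \<longleftrightarrow> distinct xs \<and> set xs = A"
proof
  assume A: "finite A" and xs: "mset xs = mset_set A"
  have set: "set xs = A" using arg_cong[OF xs, of set_mset] A by simp
  then have "distinct xs"
    unfolding distinct_count_atmost_1 xs using A by (simp add: count_mset_set')
  with set show "distinct xs \<and> set xs = A" by simp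
qed (auto simp: mset_set_set)

lemma finite_edges: "wf_graph G \<Longrightarrow> finite (edges G)"
proof -
  have "edges G = (\<lambda>h. {h, mate G h}) ` hedges G" by (auto simp: edges_def)
  then show "wf_graph G \<Longrightarrow> finite (edges G)" by (simp add: wf_graph_def)
qed

lemma circuit_decomposition_edge_mset:
  "circuit_decomposition G D \<Longrightarrow> edge_mset (concat D) = mset_set (edges G)"
  using mset_set_set[of "map arc_edge (concat D)"] by (simp add: circuit_decomposition_def map_concat)

lemma mset_concat_remove1: "C \<in> set F \<Longrightarrow> mset (concat F) = mset C + mset (concat (remove1 C F))"
  by (induction F) auto

lemma mset_concat_remove2:
  "A \<in> set F \<Longrightarrow> B \<in> set F \<Longrightarrow> A \<noteq> B \<Longrightarrow>
    mset (concat F) = mset A + mset B + mset (concat (remove1 B (remove1 A F)))"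
  using mset_concat_remove1[of A F] mset_concat_remove1[of B "remove1 A F"]
  by (simp add: in_set_remove1 ac_simps)

lemma circuit_decomposition_edge_mset_remove2:
  assumes "circuit_decomposition G F" "A \<in> set F" "B \<in> set F" "A \<noteq> B"
  shows "edge_mset A + edge_mset B + edge_mset (concat (remove1 B (remove1 A F))) = mset_set (edges G)"
  using arg_cong[OF mset_concat_remove2[OF assms(2-4)], of "image_mset arc_edge"]
    circuit_decomposition_edge_mset[OF assms(1)] by simp

lemma circuit_decomposition_arc:
  "circuit_decomposition G D \<Longrightarrow> C \<in> set D \<Longrightarrow> a \<in> set C \<Longrightarrow> is_arc G a"
  by (auto simp: circuit_decomposition_def is_circuit_iff_walk)

lemma circuit_decomposition_covers:
  assumes "circuit_decomposition G F" "e \<in> edges G"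
  obtains C a where "C \<in> set F" "a \<in> set C" "arc_edge a = e"
proof -
  have "edges G = (\<Union>C\<in>set F. arc_edge ` set C)"
    using assms(1) by (simp add: circuit_decomposition_def map_concat)
  then have "e \<in> (\<Union>C\<in>set F. arc_edge ` set C)" using assms(2) by (simp only:)
  then obtain C where C: "C \<in> set F" "e \<in> arc_edge ` set C" by (rule UN_E)
  from C(2) obtain a where "e = arc_edge a" "a \<in> set C" by (rule imageE)
  then show ?thesis using that C(1) by simp
qed

text \<open>The edge multiset records that every edge is used exactly once, so the circuits
  only have to be checked to be closed walks.\<close>

lemma circuit_decomposition_of_closed_walks:
  assumes "finite (edges G)"
    and walks: "\<forall>C\<in>set D. C \<noteq> [] \<and> (\<forall>a\<in>set C. is_arc G a) \<and> (\<exists>x. walk G C x x)"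
    and edges: "edge_mset (concat D) = mset_set (edges G)"
  shows "circuit_decomposition G D"
proof -
  have dist: "distinct (map arc_edge (concat D))" and set: "set (map arc_edge (concat D)) = edges G"
    using edges mset_eq_mset_set_iff[OF assms(1)] by blast+
  have "is_circuit G C" if "C \<in> set D" for C
  proof -
    have "distinct (map arc_edge C)"
      using dist that by (auto simp: map_concat distinct_concat_iff)
    then show ?thesis using walks that is_circuitI[of C G] by blast
  qed
  then show ?thesis using dist set by (simp only: circuit_decomposition_def map_concat) blast
qed

lemma circuit_decomposition_mset_cong:
  assumes D: "circuit_decomposition G D" and M: "mset (concat F) = mset (concat D)"
    and walks: "\<forall>C\<in>set F. C \<noteq> [] \<and> (\<exists>x. walk G C x x)"
  shows "circuit_decomposition G F"
proof (rule circuit_decomposition_of_closed_walks)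
  have "edges G = set (concat (map (map arc_edge) D))" using D by (simp add: circuit_decomposition_def)
  then show "finite (edges G)" by simp
  have arcs: "set (concat F) = set (concat D)" using arg_cong[OF M, of set_mset] by simp
  have "is_arc G a" if "C \<in> set F" "a \<in> set C" for C a
    using that arcs circuit_decomposition_arc[OF D] unfolding set_concat by blast
  then show "\<forall>C\<in>set F. C \<noteq> [] \<and> (\<forall>a\<in>set C. is_arc G a) \<and> (\<exists>x. walk G C x x)"
    using walks by blast
  show "edge_mset (concat F) = mset_set (edges G)"
    using circuit_decomposition_edge_mset[OF D] by (simp add: M)
qed

definition first_return :: "'v hgraph \<Rightarrow> 'v \<Rightarrow> arc list \<Rightarrow> bool" where
  "first_return G b P \<longleftrightarrow> P \<noteq> [] \<and> walk G P b b \<and> b \<notin> tail G ` set (tl P)"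

lemma closed_walk_split_first_returns:
  "walk G T b b \<Longrightarrow> T \<noteq> [] \<Longrightarrow> \<exists>Ps. concat Ps = T \<and> (\<forall>P\<in>set Ps. first_return G b P)"
proof (induction "length T" arbitrary: T rule: less_induct)
  case less
  then obtain a R where T: "T = a # R" by (cases T) auto
  show ?case
  proof (cases "\<exists>c\<in>set R. tail G c = b")
    case False
    then have "first_return G b T" using less T by (auto simp: first_return_def)
    then show ?thesis by (intro exI[of _ "[T]"]) auto
  next
    case True
    then obtain A c B where R: "R = A @ c # B" and c: "tail G c = b" and A: "\<forall>y\<in>set A. tail G y \<noteq> b"
      using split_list_first_prop[of R "\<lambda>c. tail G c = b"] by blast
    have "walk G ((a # A) @ (c # B)) b b" using less(2) T R by simp
    then obtain y where "walk G (a # A) b y" "walk G (c # B) y b" by (auto simp only: walk_append)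
    then have "walk G (a # A) b b" and w2: "walk G (c # B) b b" using c by auto
    then have "first_return G b (a # A)" using A by (auto simp: first_return_def)
    moreover obtain Ps where "concat Ps = c # B" "\<forall>P\<in>set Ps. first_return G b P"
      using less(1)[OF _ w2] T R by auto
    ultimately show ?thesis using T R by (intro exI[of _ "(a # A) # Ps"]) auto
  qed
qed

lemma circuit_rotate:
  assumes "is_circuit G C" "hits G C b"
  shows "\<exists>T. mset T = mset C \<and> walk G T b b \<and> T \<noteq> []"
proof -
  let ?x = "trail_tail G C"
  have w: "walk G C ?x ?x" using assms(1) by (simp add: is_circuit_iff_walk)
  have "b \<in> tail G ` set C"
    using assms(2) closed_walk_heads_subset[OF w] unfolding hits_def by blast
  then obtain A c B where C: "C = A @ c # B" and c: "tail G c = b"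
    by (metis image_iff split_list)
  from w obtain y where "walk G A ?x y" "walk G (c # B) y ?x"
    unfolding C walk_append by blast
  then have "walk G ((c # B) @ A) b b" using c by (intro walk_appendI) auto
  then show ?thesis using C by (intro exI[of _ "(c # B) @ A"]) auto
qed

lemma num_nonzero_simps [simp]:
  "num_nonzero \<gamma> [] = 0"
  "num_nonzero \<gamma> (C # F) = (if weight \<gamma> C \<noteq> 0 then 1 else 0) + num_nonzero \<gamma> F"
  "num_nonzero \<gamma> (F1 @ F2) = num_nonzero \<gamma> F1 + num_nonzero \<gamma> F2"
  by (simp_all add: num_nonzero_def)

lemma num_nonzero_remove1:
  "C \<in> set F \<Longrightarrow> num_nonzero \<gamma> F = (if weight \<gamma> C \<noteq> 0 then 1 else 0) + num_nonzero \<gamma> (remove1 C F)"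
  by (induction F) auto

lemma num_nonzero_pos_if_weight_concat: "weight \<gamma> (concat Ps) \<noteq> 0 \<Longrightarrow> 1 \<le> num_nonzero \<gamma> Ps"
proof (induction Ps)
  case (Cons P Ps) then show ?case by (cases "weight \<gamma> P = 0") auto
qed simp

lemma split_first_returns:
  assumes "\<forall>C\<in>set D. is_circuit G C \<and> hits G C b"
  shows "\<exists>F. mset (concat F) = mset (concat D) \<and> (\<forall>P\<in>set F. first_return G b P) \<and>
    num_nonzero \<gamma> D \<le> num_nonzero \<gamma> F"
  using assms
proof (induction D)
  case Nil then show ?case by (intro exI[of _ "[]"]) auto
next
  case (Cons C D)
  then obtain F where F: "mset (concat F) = mset (concat D)" "\<forall>P\<in>set F. first_return G b P"
    "num_nonzero \<gamma> D \<le> num_nonzero \<gamma> F"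
    by auto
  obtain T where T: "mset T = mset C" "walk G T b b" "T \<noteq> []" using circuit_rotate Cons(2) by force
  obtain Ps where Ps: "concat Ps = T" "\<forall>P\<in>set Ps. first_return G b P"
    using closed_walk_split_first_returns[OF T(2,3)] by blast
  have "(if weight \<gamma> C \<noteq> 0 then 1 else 0) \<le> num_nonzero \<gamma> Ps"
    using num_nonzero_pos_if_weight_concat[of \<gamma> Ps] Ps(1) weight_mset[OF T(1)] by auto
  then show ?case using F Ps T by (intro exI[of _ "Ps @ F"]) auto
qed

lemma first_return_decomposition:
  assumes "circuit_decomposition G D" "\<forall>C\<in>set D. hits G C b"
  shows "\<exists>F. circuit_decomposition G F \<and> (\<forall>P\<in>set F. first_return G b P) \<and>
    num_nonzero \<gamma> D \<le> num_nonzero \<gamma> F"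
proof -
  obtain F where F: "mset (concat F) = mset (concat D)" "\<forall>P\<in>set F. first_return G b P"
    "num_nonzero \<gamma> D \<le> num_nonzero \<gamma> F"
    using split_first_returns[of D G b \<gamma>] assms by (auto simp: circuit_decomposition_def)
  then have "circuit_decomposition G F"
    using circuit_decomposition_mset_cong[OF assms(1)] by (auto simp: first_return_def)
  then show ?thesis using F by blast
qed

section \<open>Floodings and the flooding number\<close>

definition end_count :: "'v hgraph \<Rightarrow> 'v \<Rightarrow> arc \<Rightarrow> nat" where
  "end_count G v a = (if tail G a = v then 1 else 0) + (if head G a = v then 1 else 0)"

lemma card_arc_ends:
  assumes "wf_graph G" "is_arc G a"
  shows "card {x \<in> arc_edge a. inc G x = v} = end_count G v a"
proof -
  have "fst a \<noteq> snd a" using assms by (auto simp: wf_graph_def is_arc_def)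
  moreover have eq: "{x \<in> arc_edge a. inc G x = v} =
      (if tail G a = v then {fst a} else {}) \<union> (if head G a = v then {snd a} else {})"
    by (auto simp: arc_edge_def tail_def head_def)
  ultimately show ?thesis unfolding eq
    by (cases "tail G a = v"; cases "head G a = v") (simp_all add: end_count_def)
qed

lemma deg_eq_sum_end_count:
  assumes wf: "wf_graph G" and D: "circuit_decomposition G F"
  shows "deg G v = sum_list (map (end_count G v) (concat F))"
proof -
  let ?A = "concat F"
  have arcs: "\<forall>a\<in>set ?A. is_arc G a" using circuit_decomposition_arc[OF D] by auto
  have dist: "distinct (map arc_edge ?A)" and E: "arc_edge ` set ?A = edges G"
    using D by (simp_all add: circuit_decomposition_def map_concat image_UN)
  have "hedges G = \<Union> (edges G)" using wf by (auto simp: wf_graph_def edges_def)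
  then have ends: "{h \<in> hedges G. inc G h = v} = (\<Union>a\<in>set ?A. {x \<in> arc_edge a. inc G x = v})"
    using E by blast
  have disj: "{x \<in> arc_edge a. inc G x = v} \<inter> {x \<in> arc_edge a'. inc G x = v} = {}"
    if "a \<in> set ?A" "a' \<in> set ?A" "a \<noteq> a'" for a a'
  proof -
    have "arc_edge a \<noteq> arc_edge a'" using dist that by (auto simp: distinct_map inj_on_def)
    then show ?thesis using arc_edges_disjoint[OF wf] arcs that by blast
  qed
  have "deg G v = (\<Sum>a\<in>set ?A. card {x \<in> arc_edge a. inc G x = v})"
    unfolding deg_def ends by (rule card_UN_disjoint) (use disj in \<open>auto simp: arc_edge_def\<close>)
  also have "\<dots> = (\<Sum>a\<in>set ?A. end_count G v a)"
    using arcs by (intro sum.cong refl) (auto simp: card_arc_ends[OF wf])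
  also have "\<dots> = sum_list (map (end_count G v) ?A)"
    using dist by (simp add: distinct_map sum_list_distinct_conv_sum_set)
  finally show ?thesis .
qed

lemma first_return_end_count:
  assumes "first_return G b P"
  shows "sum_list (map (end_count G b) P) = 2"
proof -
  obtain a R where P: "P = a # R" using assms by (cases P) (auto simp: first_return_def)
  have w: "walk G P b b" and R: "b \<notin> tail G ` set R" using assms P by (auto simp: first_return_def)
  let ?at_b = "\<lambda>v. if v = b then 1 else 0 :: nat"
  have zero: "map ?at_b (map (tail G) R) = map (\<lambda>_. 0) R" using R by auto
  have "map (head G) P = map (tail G) R @ [b]" using walk_heads[OF w] P by simp
  then have "sum_list (map ?at_b (map (head G) P)) = 1" using zero by (simp add: sum_list_triv)
  moreover have "sum_list (map ?at_b (map (tail G) P)) = 1" using zero w P by (simp add: sum_list_triv)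
  moreover have "sum_list (map (end_count G b) P) =
      sum_list (map ?at_b (map (tail G) P)) + sum_list (map ?at_b (map (head G) P))"
    unfolding end_count_def by (simp add: sum_list_addf comp_def)
  ultimately show ?thesis by simp
qed

lemma flooding_of_first_returns:
  assumes wf: "wf_graph G" and D: "circuit_decomposition G F" and F: "\<forall>P\<in>set F. first_return G b P"
  shows "flooding G b F"
proof -
  have "sum_list (map f (concat Ps)) = sum_list (map (\<lambda>P. sum_list (map f P)) Ps)" for f :: "arc \<Rightarrow> nat" and Ps
    by (induction Ps) auto
  then have "deg G b = sum_list (map (\<lambda>P. sum_list (map (end_count G b) P)) F)"
    using deg_eq_sum_end_count[OF wf D] by simp
  also have "\<dots> = sum_list (map (\<lambda>_. 2) F)"
    using F by (intro arg_cong[where f = sum_list] map_cong) (auto simp: first_return_end_count)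
  also have "\<dots> = 2 * length F" by (simp add: sum_list_triv)
  moreover have "\<forall>C\<in>set F. trail_tail G C = b \<and> trail_head G C = b"
    using F by (auto simp: first_return_def dest: trail_ends_walk)
  ultimately show ?thesis using D by (simp add: flooding_def)
qed

lemma circuit_decomposition_length_le: "circuit_decomposition G D \<Longrightarrow> length D \<le> card (edges G)"
proof -
  assume D: "circuit_decomposition G D"
  let ?L = "concat (map (map arc_edge) D)"
  have "\<forall>C\<in>set D. C \<noteq> []" using D by (auto simp: circuit_decomposition_def is_circuit_iff_walk)
  then have "length D \<le> length ?L"
  proof (induction D)
    case (Cons C D) then show ?case by (cases C) auto
  qed simp
  also have "\<dots> = card (edges G)"
    using D distinct_card by (fastforce simp: circuit_decomposition_def)
  finally show ?thesis .
qed

lemma finite_nonzero_decomposition_sizes: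
  "finite {length D | D. circuit_decomposition G D \<and> (\<forall>C\<in>set D. weight \<gamma> C \<noteq> 0 \<and> hits G C b)}"
  by (rule finite_subset[of _ "{..card (edges G)}"]) (auto dest: circuit_decomposition_length_le)

lemma flooding_number_ge:
  assumes "circuit_decomposition G D" "\<forall>C\<in>set D. weight \<gamma> C \<noteq> 0 \<and> hits G C b"
  shows "length D \<le> flooding_number G \<gamma> b"
  unfolding flooding_number_def using assms finite_nonzero_decomposition_sizes by (intro Max_ge) auto

lemma flooding_number_attained:
  assumes "1 \<le> flooding_number G \<gamma> b"
  obtains D where "circuit_decomposition G D" "\<forall>C\<in>set D. weight \<gamma> C \<noteq> 0 \<and> hits G C b"
    "length D = flooding_number G \<gamma> b"
proof -
  let ?S = "{length D | D. circuit_decomposition G D \<and> (\<forall>C\<in>set D. weight \<gamma> C \<noteq> 0 \<and> hits G C b)}"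
  have "Max (insert 0 ?S) \<in> insert 0 ?S"
    using finite_nonzero_decomposition_sizes by (intro Max_in) auto
  then have "flooding_number G \<gamma> b \<in> ?S" using assms unfolding flooding_number_def by auto
  then show ?thesis using that by auto
qed

lemma absorb_zero_walks:
  assumes walks: "\<forall>C\<in>set F. C \<noteq> [] \<and> walk G C b b" and nz: "1 \<le> num_nonzero \<gamma> F"
  obtains D where "mset (concat D) = mset (concat F)" "length D = num_nonzero \<gamma> F"
    "\<forall>C\<in>set D. C \<noteq> [] \<and> walk G C b b \<and> weight \<gamma> C \<noteq> 0"
proof -
  let ?N = "filter (\<lambda>C. weight \<gamma> C \<noteq> 0) F" and ?Z = "filter (\<lambda>C. weight \<gamma> C = 0) F"
  obtain C0 N where N: "?N = C0 # N"
    using nz unfolding num_nonzero_def by (cases ?N) auto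
  have "\<forall>C\<in>set (C0 # N). C \<in> set F \<and> weight \<gamma> C \<noteq> 0" unfolding N[symmetric] by simp
  then have C0: "C0 \<in> set F" "weight \<gamma> C0 \<noteq> 0" and N_sub: "\<forall>C\<in>set N. C \<in> set F \<and> weight \<gamma> C \<noteq> 0"
    by auto
  define D where "D = (C0 @ concat ?Z) # N"
  have "mset (concat ?N) = mset C0 + mset (concat N)" by (simp only: N concat.simps mset_append)
  then have "mset (concat D) = mset (concat ?N) + mset (concat ?Z)" by (simp add: D_def)
  also have "\<dots> = mset (concat F)" by (induction F) auto
  finally have "mset (concat D) = mset (concat F)" .
  moreover have "length D = num_nonzero \<gamma> F" unfolding num_nonzero_def N by (simp add: D_def)
  moreover have "walk G (C0 @ concat ?Z) b b" using walks C0 by (auto intro!: walk_appendI walk_concat)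
  moreover have "weight \<gamma> (concat ?Z) = 0" by (induction F) auto
  ultimately show ?thesis using walks C0 N_sub by (intro that[of D]) (auto simp: D_def)
qed

lemma num_nonzero_le_flooding_number:
  assumes fl: "flooding G b F" and nz: "1 \<le> num_nonzero \<gamma> F"
  shows "num_nonzero \<gamma> F \<le> flooding_number G \<gamma> b"
proof -
  have D: "circuit_decomposition G F" and walks: "\<forall>C\<in>set F. C \<noteq> [] \<and> walk G C b b"
    using fl by (auto simp: flooding_def circuit_decomposition_def is_circuit_iff_walk)
  obtain D' where D': "mset (concat D') = mset (concat F)" "length D' = num_nonzero \<gamma> F"
    "\<forall>C\<in>set D'. C \<noteq> [] \<and> walk G C b b \<and> weight \<gamma> C \<noteq> 0"
    using absorb_zero_walks[OF walks nz] by blast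
  have "circuit_decomposition G D'"
    using circuit_decomposition_mset_cong[OF D D'(1)] D'(3) by blast
  moreover have "hits G C b" if "C \<in> set D'" for C
    using D'(3) that by (cases C) (auto simp: hits_def)
  ultimately show ?thesis using flooding_number_ge[of G D' \<gamma> b] D' by auto
qed

lemma optimal_floodingI:
  assumes "flooding G b F" "flooding_number G \<gamma> b \<le> num_nonzero \<gamma> F"
  shows "optimal_flooding G \<gamma> b F"
  unfolding optimal_flooding_def
proof (intro conjI allI impI)
  fix F' assume "flooding G b F'"
  then show "num_nonzero \<gamma> F' \<le> num_nonzero \<gamma> F"
    using num_nonzero_le_flooding_number[of G b F' \<gamma>] assms(2) by (cases "num_nonzero \<gamma> F' = 0") auto
qed (fact assms(1))

lemma represents_unique:
  assumes "circuit_decomposition G F" "C1 \<in> set F" "C2 \<in> set F" "represents \<gamma> x C1" "represents \<gamma> x C2"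
  shows "C1 = C2"
proof -
  have "fst x \<in> set C1" "fst x \<in> set C2" using assms(4,5) unfolding represents_def by (metis nth_mem)+
  moreover have "distinct (concat F)" using assms(1) unfolding circuit_decomposition_def by (metis distinct_map map_concat)
  ultimately show ?thesis using assms(2,3) by (auto simp: distinct_concat_iff)
qed

lemma nonloop_elementI:
  assumes opt: "optimal_flooding G \<gamma> b F" and N: "N \<in> set F" "weight \<gamma> N = 0"
    and rep: "represents \<gamma> x N"
  shows "nonloop_element G \<gamma> b x"
proof -
  have D: "circuit_decomposition G F" using opt by (simp add: optimal_flooding_def flooding_def)
  define rep where "rep C = (if C = N then x else (hd C, weight \<gamma> [hd C]))" for C
  have repC: "represents \<gamma> (rep C) C" if "C \<in> set F" for C
  proof (cases "C = N")
    case False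
    have "C \<noteq> []" using D that by (auto simp: circuit_decomposition_def is_circuit_iff_walk)
    then show ?thesis using False unfolding represents_def rep_def
      by (intro exI[of _ 0]) (auto simp: hd_conv_nth take_Suc_conv_app_nth)
  qed (use rep in \<open>simp add: rep_def\<close>)
  have Z: "zero_circuits \<gamma> F \<subseteq> set F" by (auto simp: zero_circuits_def)
  have "system_of_representatives \<gamma> F (rep ` zero_circuits \<gamma> F)"
    unfolding system_of_representatives_def
  proof (intro conjI ballI)
    fix C assume C: "C \<in> zero_circuits \<gamma> F"
    show "\<exists>!y. y \<in> rep ` zero_circuits \<gamma> F \<and> represents \<gamma> y C"
    proof (rule ex1I[of _ "rep C"])
      fix y assume "y \<in> rep ` zero_circuits \<gamma> F \<and> represents \<gamma> y C"
      then obtain C' where "C' \<in> zero_circuits \<gamma> F" "y = rep C'" "represents \<gamma> y C"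
        by blast
      then show "y = rep C" using represents_unique[OF D _ _ repC] C Z by blast
    qed (use C Z repC in auto)
  qed (use Z repC in blast)
  moreover have "x \<in> rep ` zero_circuits \<gamma> F"
    using N by (force simp: rep_def zero_circuits_def)
  ultimately show ?thesis
    using opt unfolding nonloop_element_def flooding_matroid_bases_def by blast
qed

section \<open>Surgery on closed walks\<close>

lemma first_return_heads:
  "first_return G b C \<Longrightarrow> map (head G) C = map (tail G) (tl C) @ [b]"
  using walk_heads[of G C b b] by (simp add: first_return_def map_tl)

lemma first_return_reverse:
  assumes "first_return G b C"
  shows "first_return G b (reverse_walk C)"
proof -
  have "map (tail G) (reverse_walk C) = b # rev (map (tail G) (tl C))"
    using first_return_heads[OF assms] by (simp add: map_tail_reverse_walk)
  then have "tail G ` set (tl (reverse_walk C)) = tail G ` set (tl C)"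
    by (metis list.sel(3) map_tl set_map set_rev)
  then show ?thesis using assms walk_reverse_walk[of G C b b] by (simp add: first_return_def)
qed

lemma first_return_tail:
  "first_return G b C \<Longrightarrow> a \<in> set C \<Longrightarrow> tail G a = b \<Longrightarrow> a = hd C"
  by (cases C) (auto simp: first_return_def)

lemma first_return_head:
  assumes C: "first_return G b C" and a: "a \<in> set C" "head G a = b"
  shows "a = last C"
proof (rule ccontr)
  assume "a \<noteq> last C"
  then have "a \<in> set (butlast C)" using a by (cases C rule: rev_cases) auto
  moreover have "map (head G) (butlast C) = map (tail G) (tl C)"
    using first_return_heads[OF C] by (metis butlast_snoc map_butlast)
  ultimately have "b \<in> tail G ` set (tl C)" using a by (metis image_eqI list.set_map)
  then show False using C by (simp add: first_return_def)
qed

lemma first_return_reorient: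
  assumes wf: "wf_graph G" and C: "first_return G b C" "a \<in> set C" "is_arc G a"
    and e: "is_arc G e" "tail G e = b" "arc_edge a = arc_edge e"
  obtains C' where "first_return G b C'" "hd C' = e" "C' = C \<or> C' = reverse_walk C"
proof -
  consider "a = e" | "a = reverse_arc e" using arc_eq_or_reverse[OF wf e(1) C(3)] e(3) by metis
  then show ?thesis
  proof cases
    case 1
    then show ?thesis using that C first_return_tail[OF C(1,2)] e(2) by metis
  next
    case 2
    then have "a = last C" using first_return_head[OF C(1,2)] e(2) by simp
    moreover have "C \<noteq> []" using C(1) by (simp add: first_return_def)
    ultimately have "hd (reverse_walk C) = e" using 2 hd_reverse_walk by (metis reverse_arc_simps(4))
    then show ?thesis using that first_return_reverse[OF C(1)] by blast
  qed
qed

lemma closed_walk_rotate: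
  assumes "walk G Q z z" "x \<in> tail G ` set Q"
  obtains Qs Qp where "Q = Qs @ Qp" "Qp \<noteq> []" "walk G Qp x z" "walk G Qs z x"
proof -
  obtain Q1 q Q2 where Q: "Q = Q1 @ q # Q2" and q: "tail G q = x"
    using assms(2) by (metis image_iff split_list)
  obtain y where "walk G Q1 z y" "walk G (q # Q2) y z" using assms(1) unfolding Q walk_append by blast
  then show ?thesis using that Q q by auto
qed

lemma represents_append: "represents \<gamma> (a, weight \<gamma> (X @ [a])) (X @ a # Y)"
  unfolding represents_def
  by (intro exI[of _ "length X"]) (simp add: nth_append take_Suc_conv_app_nth)

text \<open>The two halves of \<open>D\<close> may be traversed in either order; when \<open>D\<close> is non-zero, choosing
  the order prescribes the weight of the spliced walk up to the last arc of \<open>Q\<close>.\<close>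

lemma splice_closed_walk:
  fixes i :: bit
  assumes D: "walk G D b b" "c \<in> set D" and Q: "walk G Q z z" "tail G c \<in> tail G ` set Q"
  obtains N where "walk G N b b" "N \<noteq> []"
    "edge_mset N = edge_mset D + edge_mset Q" "weight \<gamma> N = weight \<gamma> D + weight \<gamma> Q"
    "\<forall>a\<in>set N. a \<in> set Q \<or> a \<in> set D \<or> reverse_arc a \<in> set D"
    "weight \<gamma> D = 1 \<Longrightarrow> represents \<gamma> (last Q, i) N"
proof -
  let ?x = "tail G c"
  obtain X Y0 where XY: "D = X @ c # Y0" using D(2) by (metis split_list)
  then obtain y where "walk G X b y" "walk G (c # Y0) y b" using D(1) walk_append by metis
  then have X: "walk G X b ?x" and Y: "walk G (c # Y0) ?x b" by auto
  obtain Qs Qp where Qsp: "Q = Qs @ Qp" "Qp \<noteq> []" "walk G Qp ?x z" "walk G Qs z ?x"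
    using closed_walk_rotate[OF Q] by blast
  define swap where "swap \<longleftrightarrow> weight \<gamma> X + weight \<gamma> Qp \<noteq> i"
  define X1 where "X1 = (if swap then reverse_walk (c # Y0) else X)"
  define Y1 where "Y1 = (if swap then reverse_walk X else c # Y0)"
  define N where "N = X1 @ Qp @ Qs @ Y1"
  have "walk G X1 b ?x" "walk G Y1 ?x b" using X Y walk_reverse_walk by (auto simp: X1_def Y1_def)
  then have "walk G N b b" using Qsp unfolding N_def by (blast intro: walk_appendI)
  moreover have "N \<noteq> []" using Qsp(2) by (simp add: N_def)
  moreover have "edge_mset N = edge_mset D + edge_mset Q"
    by (simp add: N_def X1_def Y1_def XY Qsp(1) ac_simps)
  moreover have "weight \<gamma> X1 + weight \<gamma> Y1 = weight \<gamma> D"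
    by (simp add: X1_def Y1_def XY ac_simps del: add_bit_eq_xor)
  then have "weight \<gamma> N = weight \<gamma> D + weight \<gamma> Q"
    by (simp add: N_def Qsp(1) ac_simps del: add_bit_eq_xor)
  moreover have "\<forall>a\<in>set N. a \<in> set Q \<or> a \<in> set D \<or> reverse_arc a \<in> set D"
    by (auto simp: N_def X1_def Y1_def XY Qsp(1) set_reverse_walk)
  moreover have "represents \<gamma> (last Q, i) N" if "weight \<gamma> D = 1"
  proof -
    obtain Qp' where Qp': "Qp = Qp' @ [last Q]" using Qsp(1,2) by (metis append_butlast_last_id last_appendR)
    have "weight \<gamma> (X1 @ Qp) = i"
      using that unfolding X1_def swap_def XY
      by (cases "weight \<gamma> X"; cases "weight \<gamma> (c # Y0)"; cases "weight \<gamma> Qp"; cases i) auto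
    then show ?thesis
      using represents_append[of \<gamma> "last Q" "X1 @ Qp'" "Qs @ Y1"] Qp' by (simp add: N_def)
  qed
  ultimately show ?thesis using that by blast
qed

lemma reorientation:
  assumes "C' = C \<or> C' = reverse_walk C"
  shows "edge_mset C' = edge_mset C" "weight \<gamma> C' = weight \<gamma> C"
    "a \<in> set C' \<Longrightarrow> a \<in> set C \<or> reverse_arc a \<in> set C"
  using assms by (auto simp: set_reverse_walk)

lemma subset_mset_if_add_eq: "M + {#x#} = K + P \<Longrightarrow> x \<notin># P \<Longrightarrow> P \<subseteq># M"
proof (rule mset_subset_eqI)
  fix y assume "M + {#x#} = K + P" "x \<notin># P"
  then have "count M y + count {#x#} y = count K y + count P y" "count P x = 0"
    by (metis count_union, simp add: not_in_iff)
  then show "count P y \<le> count M y" by (cases "y = x") auto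
qed

lemma connected_closed_set:
  assumes "connected_graph G" "x \<in> verts G" "x \<in> V"
    and closed: "\<forall>g\<in>hedges G. inc G g \<in> V \<longrightarrow> inc G (mate G g) \<in> V"
  shows "verts G \<subseteq> V"
proof
  fix y assume "y \<in> verts G"
  then have "(x, y) \<in> (adj G)\<^sup>*" using assms(1,2) by (simp add: connected_graph_def)
  then show "y \<in> V"
  proof (induction rule: rtrancl_induct)
    case (step y z)
    then show ?case using closed by (auto simp: adj_def)
  qed (fact assms(3))
qed

section \<open>Reductions\<close>

locale edge_reduction =
  fixes G :: "'v hgraph" and b :: 'v and h r h' r' :: nat and \<gamma> \<gamma>' :: signature
  assumes wf: "wf_graph G" and b_vertex: "b \<in> verts G"
    and edge: "edge_of_G_minus G b h r"
    and fresh: "h' \<notin> hedges G" "r' \<notin> hedges G" "h' \<noteq> r'"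
    and signature_old: "\<forall>e\<in>edges G - {{h, r}}. \<gamma>' e = \<gamma> e"
    and signature_new: "\<gamma>' {h, h'} + \<gamma>' {r, r'} = \<gamma> {h, r}"
begin

definition G' :: "'v hgraph" where
  "G' = \<lparr>verts = verts G, hedges = hedges G \<union> {h', r'}, inc = (inc G)(h' := b, r' := b),
         mate = (mate G)(h := h', h' := h, r := r', r' := r)\<rparr>"

lemma is_reduction: "is_reduction G \<gamma> b G' \<gamma>'"
  unfolding is_reduction_def G'_def using edge fresh signature_old signature_new by blast

lemma mate_h: "mate G h = r"
  using edge by (simp add: edge_of_G_minus_def)

lemma half_edges:
  "h \<in> hedges G" "r \<in> hedges G" "mate G r = h" "h \<noteq> r"
  "inc G h \<noteq> b" "inc G r \<noteq> b" "h \<noteq> h'" "h \<noteq> r'" "r \<noteq> h'" "r \<noteq> r'"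
  using wf edge fresh by (auto simp: edge_of_G_minus_def wf_graph_def)

lemma reduced_inc_mate:
  "inc G' = (inc G)(h' := b, r' := b)" "mate G' = (mate G)(h := h', h' := h, r := r', r' := r)"
  by (simp_all add: G'_def)

lemma reduced_simps [simp]:
  "verts G' = verts G" "hedges G' = hedges G \<union> {h', r'}"
  "mate G' h = h'" "mate G' h' = h" "mate G' r = r'" "mate G' r' = r"
  "inc G' h' = b" "inc G' r' = b"
  unfolding G'_def using half_edges fresh by auto

lemma reduced_other:
  "x \<notin> {h, r, h', r'} \<Longrightarrow> mate G' x = mate G x" "x \<notin> {h', r'} \<Longrightarrow> inc G' x = inc G x"
  unfolding reduced_inc_mate by auto

lemma mate_other: "x \<in> hedges G \<Longrightarrow> x \<notin> {h, r} \<Longrightarrow> mate G x \<notin> {h, r, h', r'} \<and> mate G x \<in> hedges G"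
proof -
  assume x: "x \<in> hedges G" "x \<notin> {h, r}"
  have "mate G (mate G x) = x" "mate G x \<in> hedges G" using wf x by (auto simp: wf_graph_def)
  then show ?thesis using x mate_h half_edges(3) fresh by auto
qed

lemma wf_reduced: "wf_graph G'"
  unfolding wf_graph_def
proof (intro conjI ballI)
  show "finite (verts G')" "finite (hedges G')" using wf by (auto simp: wf_graph_def)
next
  fix x assume x: "x \<in> hedges G'"
  show "inc G' x \<in> verts G'"
    using x wf b_vertex fresh by (cases "x \<in> {h', r'}") (auto simp: wf_graph_def reduced_other)
  have "mate G' x \<in> hedges G' \<and> mate G' x \<noteq> x \<and> mate G' (mate G' x) = x"
  proof (cases "x \<in> {h, r, h', r'}")
    case False
    then have "mate G x \<notin> {h, r, h', r'}" "mate G x \<in> hedges G" "mate G x \<noteq> x" "mate G (mate G x) = x"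
      using x mate_other wf by (auto simp: wf_graph_def)
    then show ?thesis using False by (simp add: reduced_other)
  qed (unfold reduced_inc_mate, use half_edges mate_h fresh in auto)
  then show "mate G' x \<in> hedges G'" "mate G' x \<noteq> x" "mate G' (mate G' x) = x" by auto
qed

lemma deg_reduced: "deg G' b = deg G b + 2"
proof -
  have "{x \<in> hedges G'. inc G' x = b} = insert h' (insert r' {x \<in> hedges G. inc G x = b})"
    using fresh unfolding reduced_inc_mate by auto
  moreover have "finite {x \<in> hedges G. inc G x = b}" using wf by (auto simp: wf_graph_def)
  ultimately show ?thesis unfolding deg_def using fresh by simp
qed

lemma edges_reduced: "edges G' = (edges G - {{h, r}}) \<union> {{h, h'}, {r, r'}}"
proof -
  let ?e = "\<lambda>H x. {x, mate H x}"
  have "hedges G' = {h, r, h', r'} \<union> (hedges G - {h, r})" using half_edges by auto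
  then have "edges G' = ?e G' ` {h, r, h', r'} \<union> ?e G' ` (hedges G - {h, r})"
    unfolding edges_def by blast
  moreover have "?e G' ` {h, r, h', r'} = {{h, h'}, {r, r'}}" by (auto simp: insert_commute)
  moreover have "?e G' ` (hedges G - {h, r}) = ?e G ` (hedges G - {h, r})"
    using fresh unfolding reduced_inc_mate by (intro image_cong refl) auto
  moreover have "?e G ` (hedges G - {h, r}) = edges G - {{h, r}}"
  proof -
    have eqv: "?e G x = {h, r} \<longleftrightarrow> x \<in> {h, r}" if "x \<in> hedges G" for x
      using that half_edges mate_h by (auto simp: doubleton_eq_iff)
    show ?thesis
    proof (intro equalityI subsetI)
      fix y assume "y \<in> ?e G ` (hedges G - {h, r})"
      then obtain x where "x \<in> hedges G" "x \<notin> {h, r}" "y = ?e G x" by blast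
      then show "y \<in> edges G - {{h, r}}" using eqv[of x] by (auto simp: edges_def)
    next
      fix y assume "y \<in> edges G - {{h, r}}"
      then obtain x where "x \<in> hedges G" "y = ?e G x" "y \<noteq> {h, r}" by (auto simp: edges_def)
      then show "y \<in> ?e G ` (hedges G - {h, r})" using eqv[of x] by blast
    qed
  qed
  ultimately show ?thesis by (simp only: Un_commute)
qed

lemma edges_new:
  "{h, r} \<in> edges G" "{h, h'} \<notin> edges G" "{r, r'} \<notin> edges G"
  "{h, h'} \<noteq> {r, r'}" "{h, h'} \<noteq> {h, r}" "{r, r'} \<noteq> {h, r}"
proof -
  show "{h, r} \<in> edges G" using half_edges(1) mate_h unfolding edges_def by blast
  have "hedges G = \<Union> (edges G)" using wf by (auto simp: wf_graph_def edges_def)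
  then show "{h, h'} \<notin> edges G" "{r, r'} \<notin> edges G" using fresh by auto
  show "{h, h'} \<noteq> {r, r'}" "{h, h'} \<noteq> {h, r}" "{r, r'} \<noteq> {h, r}"
    using half_edges fresh by (auto simp: doubleton_eq_iff)
qed

lemma mset_set_edges_reduced:
  "mset_set (edges G') = mset_set (edges G) - {#{h, r}#} + {#{h, h'}, {r, r'}#}"
proof -
  have fin: "finite (edges G)" using finite_edges[OF wf] .
  have "mset_set (edges G') = mset_set (edges G - {{h, r}}) + mset_set {{h, h'}, {r, r'}}"
    unfolding edges_reduced using fin edges_new by (intro mset_set_Union) auto
  moreover have "mset_set (edges G) = add_mset {h, r} (mset_set (edges G - {{h, r}}))"
    using fin edges_new(1) by (rule mset_set.remove)
  ultimately show ?thesis using edges_new(4) by simp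
qed

definition old_arc :: "arc \<Rightarrow> bool" where
  "old_arc a \<longleftrightarrow> is_arc G a \<and> fst a \<notin> {h, r, h', r'} \<and> snd a \<notin> {h, r, h', r'}"

lemma reduced_arc_cases:
  assumes "is_arc G' a"
  shows "arc_edge a = {h, h'} \<or> arc_edge a = {r, r'} \<or> old_arc a"
proof (cases "fst a \<in> {h, r, h', r'}")
  case True
  have s: "snd a = mate G' (fst a)" using assms by (simp add: is_arc_def)
  consider "fst a = h" | "fst a = r" | "fst a = h'" | "fst a = r'" using True by blast
  then show ?thesis using s by cases (simp_all add: arc_edge_def insert_commute)
next
  case False
  then have "fst a \<in> hedges G" "snd a = mate G (fst a)"
    using assms fresh by (auto simp: is_arc_def reduced_other)
  then show ?thesis using False mate_other by (auto simp: old_arc_def is_arc_def)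
qed

lemma old_arc_props:
  assumes "old_arc a"
  shows "is_arc G a" "is_arc G' a" "tail G' a = tail G a" "head G' a = head G a"
    "arc_edge a \<in> edges G - {{h, r}}" "old_arc (reverse_arc a)"
proof -
  have a: "fst a \<in> hedges G" "snd a = mate G (fst a)" "fst a \<notin> {h, r, h', r'}" "snd a \<notin> {h, r, h', r'}"
    using assms by (auto simp: old_arc_def is_arc_def)
  show "is_arc G a" using assms by (simp add: old_arc_def)
  show "is_arc G' a" "tail G' a = tail G a" "head G' a = head G a"
    using a by (auto simp: is_arc_def tail_def head_def reduced_other)
  show "arc_edge a \<in> edges G - {{h, r}}"
    using a by (auto simp: arc_edge_def edges_def doubleton_eq_iff)
  have "is_arc G (reverse_arc a)" using is_arc_reverse_arc[OF wf] assms by (simp add: old_arc_def)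
  then show "old_arc (reverse_arc a)" using a by (auto simp: old_arc_def reverse_arc_def)
qed

lemma walk_old: "\<forall>a\<in>set T. old_arc a \<Longrightarrow> walk G' T x y \<longleftrightarrow> walk G T x y"
  by (induction T arbitrary: x) (auto simp: old_arc_props)

lemma weight_old: "\<forall>a\<in>set T. old_arc a \<Longrightarrow> weight \<gamma>' T = weight \<gamma> T"
proof (induction T)
  case (Cons a T)
  then have "\<gamma>' (arc_edge a) = \<gamma> (arc_edge a)" using old_arc_props(5) signature_old by simp
  then show ?case using Cons by simp
qed simp

lemma old_arcsI:
  assumes arcs: "\<forall>a\<in>set T. is_arc G' a"
    and part: "edge_mset T + {#{h, h'}, {r, r'}#} \<subseteq># mset_set (edges G')"
  shows "\<forall>a\<in>set T. old_arc a"
proof -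
  have c: "count (edge_mset T + {#{h, h'}, {r, r'}#}) e \<le> 1" for e
  proof -
    have "count (mset_set (edges G')) e \<le> 1" by (simp add: count_mset_set')
    then show ?thesis using mset_subset_eq_count[OF part, of e] by linarith
  qed
  have "count (edge_mset T) {h, h'} = 0" "count (edge_mset T) {r, r'} = 0"
    using c[of "{h, h'}"] c[of "{r, r'}"] edges_new(4) by simp_all
  then have "{h, h'} \<notin># edge_mset T" "{r, r'} \<notin># edge_mset T"
    by (simp_all only: not_in_iff)
  then show ?thesis using arcs reduced_arc_cases by fastforce
qed

lemma circuit_decomposition_unreduce:
  assumes F': "circuit_decomposition G' F'"
    and M: "edge_mset (concat F) + {#{h, h'}, {r, r'}#} = edge_mset (concat F') + {#{h, r}#}"
    and walks: "\<forall>C\<in>set F. C \<noteq> [] \<and> (\<forall>a\<in>set C. is_arc G a) \<and> walk G C b b"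
  shows "circuit_decomposition G F"
proof (rule circuit_decomposition_of_closed_walks[OF finite_edges[OF wf]])
  show "\<forall>C\<in>set F. C \<noteq> [] \<and> (\<forall>a\<in>set C. is_arc G a) \<and> (\<exists>x. walk G C x x)"
    using walks by blast
  let ?E = "mset_set (edges G)" and ?new = "{#{h, h'}, {r, r'}#}"
  have "edge_mset (concat F) + ?new = (?E - {#{h, r}#} + {#{h, r}#}) + ?new"
    using M unfolding circuit_decomposition_edge_mset[OF F'] mset_set_edges_reduced
    by (simp only: ac_simps)
  moreover have "{h, r} \<in># ?E" using edges_new(1) finite_edges[OF wf] by simp
  ultimately show "edge_mset (concat F) = ?E" by simp
qed

lemma reoriented_arc:
  "circuit_decomposition G' F' \<Longrightarrow> C \<in> set F' \<Longrightarrow> C' = C \<or> C' = reverse_walk C \<Longrightarrow> a \<in> set C' \<Longrightarrow>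
    is_arc G' a"
  using reorientation(3) circuit_decomposition_arc is_arc_reverse_arc[OF wf_reduced]
  by (metis reverse_arc_simps(4))

lemma old_arcs_of_remaining_circuits:
  assumes F': "circuit_decomposition G' F'" and AB: "A \<in> set F'" "B \<in> set F'" "A \<noteq> B"
    and new: "{#{h, h'}, {r, r'}#} \<subseteq># edge_mset A + edge_mset B"
  shows "\<forall>C\<in>set (remove1 B (remove1 A F')). \<forall>a\<in>set C. old_arc a"
proof -
  let ?R = "remove1 B (remove1 A F')"
  have "edge_mset (concat ?R) + {#{h, h'}, {r, r'}#} \<subseteq># edge_mset (concat ?R) + (edge_mset A + edge_mset B)"
    using new by (rule subset_mset.add_left_mono)
  also have "\<dots> = mset_set (edges G')"
    using circuit_decomposition_edge_mset_remove2[OF F' AB] by (simp add: ac_simps)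
  finally have part: "edge_mset (concat ?R) + {#{h, h'}, {r, r'}#} \<subseteq># mset_set (edges G')" .
  have "set ?R \<subseteq> set F'" by (meson order_trans set_remove1_subset)
  then have "\<forall>a\<in>set (concat ?R). is_arc G' a" using circuit_decomposition_arc[OF F'] by auto
  then have "\<forall>a\<in>set (concat ?R). old_arc a" using part by (rule old_arcsI)
  then show ?thesis by simp
qed

lemma old_arcs_of_other_circuit:
  assumes F': "circuit_decomposition G' F'" and AB: "A \<in> set F'" "B \<in> set F'" "A \<noteq> B"
    and new: "{#{h, h'}, {r, r'}#} \<subseteq># edge_mset A"
  shows "\<forall>a\<in>set B. old_arc a"
proof -
  have "edge_mset B + {#{h, h'}, {r, r'}#} \<subseteq># edge_mset B + edge_mset A"
    using new by (rule subset_mset.add_left_mono)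
  also have "\<dots> \<subseteq># edge_mset A + edge_mset B + edge_mset (concat (remove1 B (remove1 A F')))"
    by (simp add: ac_simps)
  also have "\<dots> = mset_set (edges G')" using circuit_decomposition_edge_mset_remove2[OF F' AB] .
  finally show ?thesis using old_arcsI circuit_decomposition_arc[OF F' AB(2)] by blast
qed

lemma unreduce_flooding:
  assumes F': "circuit_decomposition G' F'" "\<forall>C\<in>set F'. first_return G' b C"
    and AB: "A \<in> set F'" "B \<in> set F'" "A \<noteq> B"
    and N: "N \<noteq> []" "walk G N b b" "\<forall>a\<in>set N. is_arc G a"
    and NE: "edge_mset N + {#{h, h'}, {r, r'}#} = edge_mset A + edge_mset B + {#{h, r}#}"
  defines "R \<equiv> remove1 B (remove1 A F')"
  shows "flooding G b (N # R)" "num_nonzero \<gamma> R = num_nonzero \<gamma>' R"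
proof -
  have B: "B \<in> set (remove1 A F')" using AB by (simp add: in_set_remove1)
  have "{#{h, h'}, {r, r'}#} \<subseteq># edge_mset A + edge_mset B"
    using NE edges_new(5,6) by (intro subset_mset_if_add_eq[of _ "{h, r}" "edge_mset N"]) auto
  then have old: "\<forall>C\<in>set R. \<forall>a\<in>set C. old_arc a" unfolding R_def by (rule old_arcs_of_remaining_circuits[OF F'(1) AB])
  have RF: "set R \<subseteq> set F'" unfolding R_def by (meson order_trans set_remove1_subset)
  then have walks: "\<forall>C\<in>set R. C \<noteq> [] \<and> (\<forall>a\<in>set C. is_arc G a) \<and> walk G C b b"
    using F'(2) old walk_old old_arc_props(1) by (fastforce simp: first_return_def)
  have "edge_mset (concat (N # R)) + {#{h, h'}, {r, r'}#} = edge_mset (concat F') + {#{h, r}#}"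
    using NE mset_concat_remove2[OF AB] unfolding R_def by (simp add: ac_simps add_mset_commute)
  then have "circuit_decomposition G (N # R)"
    using circuit_decomposition_unreduce[OF F'(1)] walks N by auto
  moreover have "length F' = length R + 2"
    using length_pos_if_in_set[OF B] AB(1) B unfolding R_def by (simp add: length_remove1)
  then have "2 * length (N # R) = deg G b"
    using flooding_of_first_returns[OF wf_reduced F'] deg_reduced by (simp add: flooding_def)
  moreover have "\<forall>C\<in>set (N # R). trail_tail G C = b \<and> trail_head G C = b"
    using walks N trail_ends_walk by (metis set_ConsD)
  ultimately show "flooding G b (N # R)" by (simp add: flooding_def)
  show "num_nonzero \<gamma> R = num_nonzero \<gamma>' R"
    unfolding num_nonzero_def using old weight_old by (metis (mono_tags, lifting) filter_cong)
qed

lemma merged_flooding_optimal: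
  assumes F': "circuit_decomposition G' F'" "\<forall>C\<in>set F'. first_return G' b C"
    and K: "flooding_number G \<gamma> b + 2 \<le> num_nonzero \<gamma>' F'"
    and AB: "A \<in> set F'" "B \<in> set F'" "A \<noteq> B"
    and N: "N \<noteq> []" "walk G N b b" "\<forall>a\<in>set N. is_arc G a"
    and NE: "edge_mset N + {#{h, h'}, {r, r'}#} = edge_mset A + edge_mset B + {#{h, r}#}"
    and NW: "weight \<gamma> N = weight \<gamma>' A + weight \<gamma>' B"
  shows "optimal_flooding G \<gamma> b (N # remove1 B (remove1 A F'))" "weight \<gamma>' A = 1" "weight \<gamma>' B = 1"
proof -
  let ?R = "remove1 B (remove1 A F')"
  have fl: "flooding G b (N # ?R)" and R: "num_nonzero \<gamma> ?R = num_nonzero \<gamma>' ?R"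
    using unreduce_flooding[OF F' AB N NE] by blast+
  have "num_nonzero \<gamma>' F' = (if weight \<gamma>' A \<noteq> 0 then 1 else 0) + (if weight \<gamma>' B \<noteq> 0 then 1 else 0) +
      num_nonzero \<gamma>' ?R"
    using num_nonzero_remove1[OF AB(1)] num_nonzero_remove1[of B "remove1 A F'"] AB
    by (simp add: in_set_remove1)
  moreover have "num_nonzero \<gamma> (N # ?R) = (if weight \<gamma> N \<noteq> 0 then 1 else 0) + num_nonzero \<gamma>' ?R"
    using R by simp
  moreover have "num_nonzero \<gamma> (N # ?R) \<le> flooding_number G \<gamma> b" if "1 \<le> num_nonzero \<gamma> (N # ?R)"
    using num_nonzero_le_flooding_number[OF fl that] .
  ultimately have AB1: "weight \<gamma>' A = 1 \<and> weight \<gamma>' B = 1"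
    using K NW by (cases "weight \<gamma>' A"; cases "weight \<gamma>' B") auto
  then have "flooding_number G \<gamma> b \<le> num_nonzero \<gamma> (N # ?R)"
    using K NW R \<open>num_nonzero \<gamma>' F' = _\<close> by simp
  then show "optimal_flooding G \<gamma> b (N # ?R)" using optimal_floodingI[OF fl] by blast
  show "weight \<gamma>' A = 1" "weight \<gamma>' B = 1" using AB1 by blast+
qed

lemma new_arcs: "is_arc G' (h', h)" "is_arc G' (r', r)" "is_arc G (h, r)"
  "tail G' (h', h) = b" "tail G' (r', r) = b" "head G' (h', h) = inc G h" "head G' (r', r) = inc G r"
  "arc_edge (h', h) = {h, h'}" "arc_edge (r', r) = {r, r'}" "arc_edge (h, r) = {h, r}"
  "tail G' (r, r') = inc G r" "arc_edge (r, r') = {r, r'}" "tail G (h, r) = inc G h"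
  using half_edges mate_h fresh
  by (auto simp: is_arc_def tail_def head_def arc_edge_def reduced_other insert_commute)

lemma two_circuits_glued_walk:
  assumes F': "circuit_decomposition G' F'" and C12: "C1 \<in> set F'" "C2 \<in> set F'" "C1 \<noteq> C2"
    and C1: "first_return G' b ((h', h) # P1)" "(h', h) # P1 = C1 \<or> (h', h) # P1 = reverse_walk C1"
    and C2: "first_return G' b ((r', r) # P2)" "(r', r) # P2 = C2 \<or> (r', r) # P2 = reverse_walk C2"
  defines "N \<equiv> reverse_walk P1 @ (h, r) # P2"
  shows "\<forall>a\<in>set (P1 @ P2). old_arc a" "walk G N b b" "\<forall>a\<in>set N. is_arc G a"
    "edge_mset N + {#{h, h'}, {r, r'}#} = edge_mset C1 + edge_mset C2 + {#{h, r}#}"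
proof -
  have E1: "edge_mset C1 = add_mset {h, h'} (edge_mset P1)"
    and E2: "edge_mset C2 = add_mset {r, r'} (edge_mset P2)"
    using reorientation(1)[OF C1(2)] reorientation(1)[OF C2(2)] new_arcs by simp_all
  let ?R = "remove1 C2 (remove1 C1 F')"
  have "edge_mset (P1 @ P2) + {#{h, h'}, {r, r'}#} \<subseteq>#
      edge_mset (P1 @ P2) + {#{h, h'}, {r, r'}#} + edge_mset (concat ?R)"
    by simp
  also have "\<dots> = mset_set (edges G')"
    using circuit_decomposition_edge_mset_remove2[OF F' C12] E1 E2 by (simp add: ac_simps add_mset_commute)
  finally have part: "edge_mset (P1 @ P2) + {#{h, h'}, {r, r'}#} \<subseteq># mset_set (edges G')" .
  have "\<forall>a\<in>set (P1 @ P2). is_arc G' a"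
    using reoriented_arc[OF F' C12(1) C1(2)] reoriented_arc[OF F' C12(2) C2(2)] by auto
  then show old: "\<forall>a\<in>set (P1 @ P2). old_arc a" using part by (rule old_arcsI)
  then have "walk G P1 (inc G h) b" "walk G P2 (inc G r) b"
    using C1(1) C2(1) walk_old new_arcs by (auto simp: first_return_def)
  then show "walk G N b b"
    unfolding N_def using mate_h by (auto intro!: walk_appendI walk_reverse_walk simp: tail_def head_def)
  show "\<forall>a\<in>set N. is_arc G a"
    unfolding N_def using old new_arcs(3)
    by (auto simp: set_reverse_walk intro!: old_arc_props(1) old_arc_props(6))
  show "edge_mset N + {#{h, h'}, {r, r'}#} = edge_mset C1 + edge_mset C2 + {#{h, r}#}"
    unfolding N_def using E1 E2 new_arcs by (simp add: ac_simps add_mset_commute)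
qed

lemma representative_two_circuits:
  assumes F': "circuit_decomposition G' F'" "\<forall>C\<in>set F'. first_return G' b C"
    and K: "flooding_number G \<gamma> b + 2 \<le> num_nonzero \<gamma>' F'"
    and i: "\<gamma>' {r, r'} = i + 1"
    and C12: "C1 \<in> set F'" "C2 \<in> set F'" "C1 \<noteq> C2"
    and C1: "first_return G' b ((h', h) # P1)" "(h', h) # P1 = C1 \<or> (h', h) # P1 = reverse_walk C1"
    and C2: "first_return G' b ((r', r) # P2)" "(r', r) # P2 = C2 \<or> (r', r) # P2 = reverse_walk C2"
  shows "\<exists>F N. optimal_flooding G \<gamma> b F \<and> N \<in> set F \<and> weight \<gamma> N = 0 \<and> represents \<gamma> ((h, r), i) N"
proof -
  let ?N = "reverse_walk P1 @ (h, r) # P2"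
  note glued = two_circuits_glued_walk[OF F'(1) C12 C1 C2]
  have weights: "weight \<gamma>' C1 = \<gamma>' {h, h'} + weight \<gamma> P1" "weight \<gamma>' C2 = \<gamma>' {r, r'} + weight \<gamma> P2"
    using reorientation(2)[OF C1(2), of \<gamma>'] reorientation(2)[OF C2(2), of \<gamma>'] weight_old[of P1]
      weight_old[of P2] glued(1) new_arcs by (simp_all del: add_bit_eq_xor)
  then have NW: "weight \<gamma> ?N = weight \<gamma>' C1 + weight \<gamma>' C2"
    using signature_new new_arcs by (simp add: ac_simps del: add_bit_eq_xor)
  have "?N \<noteq> []" by simp
  then have opt: "optimal_flooding G \<gamma> b (?N # remove1 C2 (remove1 C1 F'))"
    and C1_nonzero: "weight \<gamma>' C1 = 1" and "weight \<gamma>' C2 = 1"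
    using merged_flooding_optimal[OF F' K C12 _ glued(2-4) NW] by blast+
  then have "weight \<gamma> ?N = 0" using NW by simp
  have "weight \<gamma> (reverse_walk P1 @ [(h, r)]) = weight \<gamma> P1 + (\<gamma>' {h, h'} + \<gamma>' {r, r'})"
    using signature_new new_arcs by (simp del: add_bit_eq_xor)
  also have "\<dots> = weight \<gamma>' C1 + (i + 1)" using weights(1) i by (simp add: ac_simps del: add_bit_eq_xor)
  also have "\<dots> = i" using C1_nonzero by (cases i) simp_all
  finally have "represents \<gamma> ((h, r), i) ?N"
    using represents_append[of \<gamma> "(h, r)" "reverse_walk P1" P2] by simp
  then show ?thesis using opt \<open>weight \<gamma> ?N = 0\<close> by (meson list.set_intros(1))
qed

lemma old_edge_elsewhere:
  assumes F': "circuit_decomposition G' F'"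
    and C: "C \<in> set F'" "(h', h) # P @ [(r, r')] = C \<or> (h', h) # P @ [(r, r')] = reverse_walk C"
    and a: "is_arc G a" "arc_edge a \<noteq> {h, r}" "arc_edge a \<notin> arc_edge ` set P"
  shows "\<exists>D\<in>set F'. D \<noteq> C \<and> (\<exists>c\<in>set D. old_arc c \<and> (c = a \<or> c = reverse_arc a))"
proof -
  have "arc_edge a \<in> edges G" using a(1) by (auto simp: is_arc_def arc_edge_def edges_def)
  then have "arc_edge a \<in> edges G'" using a(2) edges_reduced by simp
  then obtain D c where D: "D \<in> set F'" "c \<in> set D" "arc_edge c = arc_edge a"
    by (rule circuit_decomposition_covers[OF F'])
  have "old_arc c"
    using reduced_arc_cases[OF circuit_decomposition_arc[OF F' D(1,2)]] D(3) \<open>arc_edge a \<in> edges G\<close>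
      edges_new(2,3) by auto
  moreover have ca: "c = a \<or> c = reverse_arc a"
    using arc_eq_or_reverse[OF wf a(1) old_arc_props(1)[OF \<open>old_arc c\<close>]] D(3) by simp
  moreover have "D \<noteq> C"
  proof
    assume "D = C"
    with D(2) have "c \<in> set C" by simp
    with C(2) have "c \<in> set ((h', h) # P @ [(r, r')]) \<or> reverse_arc c \<in> set ((h', h) # P @ [(r, r')])"
      by (metis image_eqI set_reverse_walk)
    moreover have "arc_edge c \<noteq> {h, h'}" "arc_edge c \<noteq> {r, r'}"
      using D(3) \<open>arc_edge a \<in> edges G\<close> edges_new(2,3) by auto
    moreover have "c \<noteq> (h', h)" "c \<noteq> (r, r')" "reverse_arc c \<noteq> (h', h)" "reverse_arc c \<noteq> (r, r')"
      using calculation(2,3) by (auto simp: arc_edge_def reverse_arc_def insert_commute)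
    ultimately have "c \<in> set P \<or> reverse_arc c \<in> set P" by auto
    then have "arc_edge c \<in> arc_edge ` set P" by (metis image_eqI reverse_arc_simps(3))
    then show False using a(3) D(3) by simp
  qed
  ultimately show ?thesis using D by blast
qed

lemma isolated_walk_vertices_closed:
  assumes F': "circuit_decomposition G' F'" "\<forall>C\<in>set F'. first_return G' b C"
    and C: "C \<in> set F'" "(h', h) # P @ [(r, r')] = C \<or> (h', h) # P @ [(r, r')] = reverse_walk C"
    and Q: "walk G (reverse_walk P @ [(h, r)]) z z" "\<forall>q\<in>set (reverse_walk P @ [(h, r)]). is_arc G q"
  defines "V \<equiv> tail G ` set (reverse_walk P @ [(h, r)])"
  assumes none: "\<forall>D\<in>set F'. D \<noteq> C \<longrightarrow> (\<forall>c\<in>set D. tail G' c \<notin> V)"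
    and g: "g \<in> hedges G" "inc G g \<in> V"
  shows "inc G (mate G g) \<in> V"
proof -
  let ?Q = "reverse_walk P @ [(h, r)]" and ?a = "(g, mate G g)"
  have a: "is_arc G ?a" "tail G ?a = inc G g" "head G ?a = inc G (mate G g)"
    using g by (simp_all add: is_arc_def tail_def head_def)
  show ?thesis
  proof (cases "arc_edge ?a \<in> arc_edge ` set ?Q")
    case True
    then obtain q where q: "q \<in> set ?Q" "arc_edge q = arc_edge ?a" by blast
    then have "?a = q \<or> ?a = reverse_arc q" using arc_eq_or_reverse[OF wf _ a(1)] Q(2) by metis
    then have "head G ?a \<in> {head G q, tail G q}" by auto
    moreover have "head G q \<in> V" "tail G q \<in> V"
      using q(1) closed_walk_heads_subset[OF Q(1)] unfolding V_def by auto
    ultimately show ?thesis using a(3) by auto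
  next
    case False
    moreover have "arc_edge ` set ?Q = insert {h, r} (arc_edge ` set P)"
      using new_arcs(10) by (simp add: set_reverse_walk image_image)
    ultimately have "arc_edge ?a \<noteq> {h, r}" "arc_edge ?a \<notin> arc_edge ` set P" by auto
    then obtain D c where D: "D \<in> set F'" "D \<noteq> C" "c \<in> set D" "old_arc c" "c = ?a \<or> c = reverse_arc ?a"
      using old_edge_elsewhere[OF F'(1) C a(1)] by blast
    have "walk G' D b b" using F'(2) D(1) by (simp add: first_return_def)
    then have "head G' c \<in> tail G' ` set D" using closed_walk_heads_subset[of G' D b] D(3) by blast
    then have "head G' c \<notin> V" "tail G' c \<notin> V" using none D(1-3) by auto
    then have "head G c \<notin> V" "tail G c \<notin> V" using old_arc_props(3,4)[OF D(4)] by simp_all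
    then show ?thesis using D(5) a g(2) by auto
  qed
qed

lemma other_circuit_meets:
  assumes conn: "connected_graph G"
    and F': "circuit_decomposition G' F'" "\<forall>C\<in>set F'. first_return G' b C"
    and C: "C \<in> set F'" "(h', h) # P @ [(r, r')] = C \<or> (h', h) # P @ [(r, r')] = reverse_walk C"
    and Q: "walk G (reverse_walk P @ [(h, r)]) z z" "\<forall>q\<in>set (reverse_walk P @ [(h, r)]). is_arc G q"
    and b: "b \<notin> tail G ` set (reverse_walk P @ [(h, r)])"
  shows "\<exists>D\<in>set F'. D \<noteq> C \<and> (\<exists>c\<in>set D. tail G' c \<in> tail G ` set (reverse_walk P @ [(h, r)]))"
proof (rule ccontr)
  let ?V = "tail G ` set (reverse_walk P @ [(h, r)])"
  assume "\<not> ?thesis"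
  then have "\<forall>g\<in>hedges G. inc G g \<in> ?V \<longrightarrow> inc G (mate G g) \<in> ?V"
    using isolated_walk_vertices_closed[OF F' C Q] by blast
  moreover have "inc G h \<in> verts G" "inc G h \<in> ?V"
    using wf half_edges(1) new_arcs(13) by (force simp: wf_graph_def)+
  ultimately have "verts G \<subseteq> ?V" using connected_closed_set[OF conn] by blast
  then show False using b b_vertex by blast
qed

lemma single_circuit_inner_walk:
  assumes F': "circuit_decomposition G' F'"
    and C: "C \<in> set F'" "(h', h) # P @ [(r, r')] = C \<or> (h', h) # P @ [(r, r')] = reverse_walk C"
    and first: "first_return G' b ((h', h) # P @ [(r, r')])"
  defines "Q \<equiv> reverse_walk P @ [(h, r)]"
  shows "edge_mset C = edge_mset P + {#{h, h'}, {r, r'}#}" "\<forall>a\<in>set P. old_arc a"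
    "walk G Q (inc G r) (inc G r)" "\<forall>q\<in>set Q. is_arc G q" "b \<notin> tail G ` set Q"
proof -
  show EC: "edge_mset C = edge_mset P + {#{h, h'}, {r, r'}#}"
    using reorientation(1)[OF C(2)] new_arcs by (simp add: add_mset_commute)
  have "edge_mset P + {#{h, h'}, {r, r'}#} \<subseteq># edge_mset C + edge_mset (concat (remove1 C F'))"
    unfolding EC by simp
  also have "\<dots> = mset_set (edges G')"
    using arg_cong[OF mset_concat_remove1[OF C(1)], of "image_mset arc_edge"]
      circuit_decomposition_edge_mset[OF F'] by simp
  finally have part: "edge_mset P + {#{h, h'}, {r, r'}#} \<subseteq># mset_set (edges G')" .
  have "\<forall>a\<in>set P. is_arc G' a" using reoriented_arc[OF F' C] by auto
  then show old: "\<forall>a\<in>set P. old_arc a" using part by (rule old_arcsI)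
  have "walk G' P (inc G h) (inc G r)" using first new_arcs by (simp add: first_return_def)
  then have "walk G P (inc G h) (inc G r)" using walk_old[OF old] by simp
  then show "walk G Q (inc G r) (inc G r)"
    unfolding Q_def using mate_h by (auto intro!: walk_appendI walk_reverse_walk simp: tail_def head_def)
  show "\<forall>q\<in>set Q. is_arc G q"
    unfolding Q_def using old new_arcs(3)
    by (auto simp: set_reverse_walk intro!: old_arc_props(1) old_arc_props(6))
  have "map (head G') ((h', h) # P) = map (tail G') (P @ [(r, r')])"
    using first_return_heads[OF first] by simp
  then have "b \<notin> head G' ` set ((h', h) # P)"
    using first unfolding first_return_def by (metis list.sel(3) list.set_map)
  moreover have "head G' ` set P = head G ` set P"
    using old old_arc_props(4) by (intro image_cong) auto
  then have "tail G ` set Q = head G' ` set ((h', h) # P)"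
    unfolding Q_def using new_arcs(6,13) by (simp add: set_reverse_walk image_image)
  ultimately show "b \<notin> tail G ` set Q" by simp
qed

lemma representative_one_circuit:
  assumes conn: "connected_graph G"
    and F': "circuit_decomposition G' F'" "\<forall>C\<in>set F'. first_return G' b C"
    and K: "flooding_number G \<gamma> b + 2 \<le> num_nonzero \<gamma>' F'"
    and i: "\<gamma>' {r, r'} = i + 1"
    and C: "C \<in> set F'" "(h', h) # P @ [(r, r')] = C \<or> (h', h) # P @ [(r, r')] = reverse_walk C"
    and first: "first_return G' b ((h', h) # P @ [(r, r')])"
  shows "\<exists>F N. optimal_flooding G \<gamma> b F \<and> N \<in> set F \<and> weight \<gamma> N = 0 \<and> represents \<gamma> ((h, r), i) N"
proof -
  let ?Q = "reverse_walk P @ [(h, r)]"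
  note inner = single_circuit_inner_walk[OF F'(1) C first]
  obtain D c where D: "D \<in> set F'" "D \<noteq> C" "c \<in> set D" "tail G' c \<in> tail G ` set ?Q"
    using other_circuit_meets[OF conn F' C inner(3-5)] by blast
  have "\<forall>a\<in>set D. old_arc a" using old_arcs_of_other_circuit[OF F'(1) C(1) D(1) D(2)[symmetric]] inner(1) by simp
  then have walkD: "walk G D b b" and "tail G c = tail G' c" and wD: "weight \<gamma>' D = weight \<gamma> D"
    and arcsD: "\<forall>a\<in>set D. is_arc G a"
    using F'(2) D(1,3) walk_old weight_old old_arc_props by (auto simp: first_return_def)
  then obtain N where N: "walk G N b b" "N \<noteq> []"
    "edge_mset N = edge_mset D + edge_mset ?Q" "weight \<gamma> N = weight \<gamma> D + weight \<gamma> ?Q"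
    "\<forall>a\<in>set N. a \<in> set ?Q \<or> a \<in> set D \<or> reverse_arc a \<in> set D"
    "weight \<gamma> D = 1 \<Longrightarrow> represents \<gamma> (last ?Q, i) N"
    using splice_closed_walk[OF walkD D(3) inner(3)] D(4) by metis
  have "\<forall>a\<in>set N. is_arc G a"
    using N(5) inner(4) arcsD is_arc_reverse_arc[OF wf] by (metis reverse_arc_simps(4))
  moreover have "edge_mset N + {#{h, h'}, {r, r'}#} = edge_mset C + edge_mset D + {#{h, r}#}"
    using N(3) inner(1) new_arcs by (simp add: ac_simps add_mset_commute)
  moreover have "weight \<gamma>' C = \<gamma>' {h, h'} + weight \<gamma> P + \<gamma>' {r, r'}"
    using reorientation(2)[OF C(2), of \<gamma>'] weight_old[OF inner(2)] new_arcs
    by (simp add: ac_simps del: add_bit_eq_xor)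
  then have NW: "weight \<gamma> N = weight \<gamma>' C + weight \<gamma>' D"
    using N(4) wD signature_new new_arcs by (simp add: ac_simps del: add_bit_eq_xor)
  ultimately have "optimal_flooding G \<gamma> b (N # remove1 D (remove1 C F'))"
    and "weight \<gamma>' C = 1" "weight \<gamma>' D = 1"
    using merged_flooding_optimal[OF F' K C(1) D(1) D(2)[symmetric] N(2,1)] by blast+
  moreover have "weight \<gamma> N = 0" "represents \<gamma> ((h, r), i) N"
    using calculation(2,3) wD N(6) NW by simp_all
  ultimately show ?thesis by (meson list.set_intros(1))
qed

lemma single_first_return_shape:
  assumes C: "first_return G' b C" "hd C = (h', h)" and a: "a \<in> set C" "is_arc G' a" "arc_edge a = {r, r'}"
  obtains P where "C = (h', h) # P @ [(r, r')]"
proof -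
  have "a = (r', r) \<or> a = (r, r')"
    using arc_eq_or_reverse[OF wf_reduced new_arcs(2) a(2)] a(3) new_arcs(9) by (auto simp: reverse_arc_def)
  moreover have "a \<noteq> (r', r)"
  proof
    assume "a = (r', r)"
    then have "a = (h', h)" using first_return_tail[OF C(1) a(1)] new_arcs(5) C(2) by simp
    then show False using a(3) new_arcs(8) edges_new(4) by simp
  qed
  ultimately have "a = last C" using first_return_head[OF C(1) a(1)] by (simp add: head_def)
  moreover obtain T where T: "C = (h', h) # T" using C by (cases C) (auto simp: first_return_def)
  ultimately have "last ((h', h) # T) = (r, r')"
    using \<open>a = (r', r) \<or> a = (r, r')\<close> \<open>a \<noteq> (r', r)\<close> by auto
  moreover have "T \<noteq> []" using calculation half_edges(9) by auto
  ultimately have "T = butlast T @ [(r, r')]" by (metis append_butlast_last_id last_ConsR)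
  then show ?thesis using that T by metis
qed

lemma representative_from_reduced_flooding:
  assumes conn: "connected_graph G"
    and F': "circuit_decomposition G' F'" "\<forall>C\<in>set F'. first_return G' b C"
    and K: "flooding_number G \<gamma> b + 2 \<le> num_nonzero \<gamma>' F'"
    and i: "\<gamma>' {r, r'} = i + 1"
  shows "\<exists>F N. optimal_flooding G \<gamma> b F \<and> N \<in> set F \<and> weight \<gamma> N = 0 \<and> represents \<gamma> ((h, r), i) N"
proof -
  obtain C1 a1 where C1: "C1 \<in> set F'" "a1 \<in> set C1" "arc_edge a1 = {h, h'}"
    using circuit_decomposition_covers[OF F'(1)] edges_reduced by blast
  obtain C2 a2 where C2: "C2 \<in> set F'" "a2 \<in> set C2" "arc_edge a2 = {r, r'}"
    using circuit_decomposition_covers[OF F'(1)] edges_reduced by blast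
  obtain C1' where C1': "first_return G' b C1'" "hd C1' = (h', h)" "C1' = C1 \<or> C1' = reverse_walk C1"
    using first_return_reorient[OF wf_reduced _ C1(2) circuit_decomposition_arc[OF F'(1) C1(1,2)]
        new_arcs(1,4) C1(3)[folded new_arcs(8)]] F'(2) C1(1) by blast
  then have C1_hd: "(h', h) # tl C1' = C1'" by (cases C1') (auto simp: first_return_def)
  show ?thesis
  proof (cases "C1 = C2")
    case False
    obtain C2' where C2': "first_return G' b C2'" "hd C2' = (r', r)" "C2' = C2 \<or> C2' = reverse_walk C2"
      using first_return_reorient[OF wf_reduced _ C2(2) circuit_decomposition_arc[OF F'(1) C2(1,2)]
          new_arcs(2,5) C2(3)[folded new_arcs(9)]] F'(2) C2(1) by blast
    then have "(r', r) # tl C2' = C2'" by (cases C2') (auto simp: first_return_def)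
    then show ?thesis
      using representative_two_circuits[OF F' K i C1(1) C2(1) False] C1' C1_hd C2' by metis
  next
    case True
    have "a2 \<in> set C1' \<or> reverse_arc a2 \<in> set C1'" using C1'(3) C2(2) True by (auto simp: set_reverse_walk)
    then obtain a2' where "a2' \<in> set C1'" "arc_edge a2' = {r, r'}" using C2(3) by (metis reverse_arc_simps(3))
    moreover have "is_arc G' a2'" using reoriented_arc[OF F'(1) C1(1) C1'(3)] calculation(1) .
    ultimately obtain P where "C1' = (h', h) # P @ [(r, r')]"
      using single_first_return_shape[OF C1'(1,2)] by blast
    then show ?thesis using representative_one_circuit[OF conn F' K i C1(1)] C1' by metis
  qed
qed

end

lemma flooding_number_first_returns:
  assumes "1 \<le> flooding_number G \<gamma> b"
  obtains F where "circuit_decomposition G F" "\<forall>P\<in>set F. first_return G b P"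
    "flooding_number G \<gamma> b \<le> num_nonzero \<gamma> F"
proof -
  obtain D where D: "circuit_decomposition G D" "\<forall>C\<in>set D. weight \<gamma> C \<noteq> 0 \<and> hits G C b"
    "length D = flooding_number G \<gamma> b"
    using flooding_number_attained[OF assms] by blast
  have "num_nonzero \<gamma> D = length D" using D(2) by (simp add: num_nonzero_def)
  moreover obtain F where "circuit_decomposition G F" "\<forall>P\<in>set F. first_return G b P"
    "num_nonzero \<gamma> D \<le> num_nonzero \<gamma> F"
    using first_return_decomposition[OF D(1)] D(2) by blast
  ultimately show ?thesis using that D(3) by simp
qed

lemma edge_reduction_exists:
  assumes "RES_graph G \<gamma> b" "is_arc G f" "tail G f \<noteq> b" "head G f \<noteq> b"
  obtains h' r' \<gamma>' where "edge_reduction G b (fst f) (snd f) h' r' \<gamma> \<gamma>'" "\<gamma>' {snd f, r'} = i + 1"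
proof -
  let ?h = "fst f" and ?r = "snd f"
  have wf: "wf_graph G" and b: "b \<in> verts G" using assms(1) by (auto simp: RES_graph_def eulerian_def)
  have e: "edge_of_G_minus G b ?h ?r"
    using assms(2-4) by (simp add: edge_of_G_minus_def is_arc_def tail_def head_def)
  have fin: "finite (hedges G)" using wf by (simp add: wf_graph_def)
  obtain h' where h': "h' \<notin> hedges G" using ex_new_if_finite[OF infinite_UNIV_nat fin] by blast
  obtain r' where r': "r' \<notin> hedges G \<union> {h'}"
    using ex_new_if_finite[OF infinite_UNIV_nat, of "hedges G \<union> {h'}"] fin by blast
  define \<gamma>' where "\<gamma>' = \<gamma>({?h, h'} := \<gamma> {?h, ?r} + i + 1, {?r, r'} := i + 1)"
  have "?h \<in> hedges G" "?r \<in> hedges G" using assms(2) wf by (auto simp: is_arc_def wf_graph_def)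
  then have new: "{?h, h'} \<notin> edges G" "{?r, r'} \<notin> edges G" "{?h, h'} \<noteq> {?r, r'}"
    using h' r' wf by (auto simp: edges_def wf_graph_def doubleton_eq_iff)
  have "edge_reduction G b ?h ?r h' r' \<gamma> \<gamma>'"
  proof
    show "\<forall>e\<in>edges G - {{?h, ?r}}. \<gamma>' e = \<gamma> e" using new by (auto simp: \<gamma>'_def)
    show "\<gamma>' {?h, h'} + \<gamma>' {?r, r'} = \<gamma> {?h, ?r}"
      using new(3) by (cases i; cases "\<gamma> {?h, ?r}") (simp_all add: \<gamma>'_def)
  qed (use wf b e h' r' in auto)
  then show ?thesis using that by (simp add: \<gamma>'_def)
qed

lemma zero_circuit_represented:
  assumes RES: "RES_graph G \<gamma> b"
    and hyp: "\<forall>G' \<gamma>'. is_reduction G \<gamma> b G' \<gamma>' \<longrightarrow> flooding_number G' \<gamma>' b \<ge> flooding_number G \<gamma> b + 2"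
    and f: "is_arc G f" "tail G f \<noteq> b" "head G f \<noteq> b"
  shows "\<exists>F N. optimal_flooding G \<gamma> b F \<and> N \<in> set F \<and> weight \<gamma> N = 0 \<and> represents \<gamma> (f, i) N"
proof -
  obtain h' r' \<gamma>' where red: "edge_reduction G b (fst f) (snd f) h' r' \<gamma> \<gamma>'" and i: "\<gamma>' {snd f, r'} = i + 1"
    using edge_reduction_exists[OF RES f] by blast
  interpret edge_reduction G b "fst f" "snd f" h' r' \<gamma> \<gamma>' by (fact red)
  have K: "flooding_number G \<gamma> b + 2 \<le> flooding_number G' \<gamma>' b" using hyp is_reduction by blast
  then have "1 \<le> flooding_number G' \<gamma>' b" by simp
  then obtain F' where F': "circuit_decomposition G' F'" "\<forall>C\<in>set F'. first_return G' b C"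
    "flooding_number G' \<gamma>' b \<le> num_nonzero \<gamma>' F'"
    by (rule flooding_number_first_returns)
  have "connected_graph G" using RES by (simp add: RES_graph_def eulerian_def)
  then show ?thesis using representative_from_reduced_flooding[OF _ F'(1,2) _ i] K F'(3) by simp
qed

theorem mainTheorem8:
  fixes G :: "'v hgraph" and \<gamma> :: signature and b :: 'v
  assumes "RES_graph G \<gamma> b"
    and "\<forall>G' \<gamma>'. is_reduction G \<gamma> b G' \<gamma>' \<longrightarrow>
           flooding_number G' \<gamma>' b \<ge> flooding_number G \<gamma> b + 2"
    and "is_arc G f"
    and "tail G f \<noteq> b" and "head G f \<noteq> b"
  shows "nonloop_element G \<gamma> b (f, 0) \<and> nonloop_element G \<gamma> b (f, 1)"
  using zero_circuit_represented[OF assms] nonloop_elementI by metis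

end
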